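(* Let $p$ be a prime and $d,\ell$ positive integers. Then \[ \Gamma(d,p,\ell)=\{\operatorname{CT}(\lambda(M,w)): M\in\operatorname{CGL}_d(p)^{(\ell)},\ w\in\mathbb{F}_p^d\}. \]
   Context: Vectors in $\mathbb{F}_p^d$ are row vectors; for a $(d\times d)$-matrix $M$ over $\mathbb{F}_p$ and $v\in\mathbb{F}_p^d$, $\lambda(M,v)$ is the map $x\mapsto xM+v$ on $\mathbb{F}_p^d$. $\operatorname{AGL}_d(p)=\{\lambda(M,v):M\in\operatorname{GL}_d(p),v\in\mathbb{F}_p^d\}$. $\operatorname{CGL}_d(p)$ is the set of $A\in\operatorname{GL}_d(p)$ without eigenvalue $-1$, $\operatorname{ACGL}_d(p)=\{\lambda(A,v):A\in\operatorname{CGL}_d(p),v\in\mathbb{F}_p^d\}$, and $\operatorname{CGL}_d(p)^{(\ell)}=\{A_1\cdots A_\ell:A_i\in\operatorname{CGL}_d(p)\}$. The cycle type $\operatorname{CT}(\sigma)$ of a permutation $\sigma$ of a finite set $\Omega$ is the monomial $x_1^{k_1}\cdots x_{|\Omega|}^{k_{|\Omega|}}\in\mathbb{Q}[x_n:n\ge1]$ with $k_j$ the number of $j$-cycles of $\sigma$, and $\operatorname{CT}(X)=\{\operatorname{CT}(\sigma):\sigma\in X\}$. Define \[ \Gamma(d,p,\ell)=\begin{cases}\operatorname{CT}(\operatorname{ACGL}_d(p)), & \ell=1,\\ \operatorname{CT}(\operatorname{AGL}_d(p)), & \ell\geq2,\ (d,p)\notin\{(1,2),(1,3),(2,2)\},\\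 \emptyset, & \ell\geq2,\ (d,p)=(1,2),\\ \{x_1^3,x_3\}, & \ell\ge2,\ (d,p)=(1,3),\\ \{x_1^4,x_2^2,x_1x_3\}, & \ell\geq 2,\ (d,p)=(2,2).\end{cases} \] *)

theory Defs
  imports "Jordan_Normal_Form.Matrix" "Jordan_Normal_Form.Char_Poly" "Berlekamp_Zassenhaus.Finite_Field"
begin

text \<open>Cycle type of a permutation sigma of a finite set Omega, encoded as the exponent
  vector of the monomial x_1^k_1 ... x_n^k_n: the function j maps to k_j, the number of
  j-cycles (= orbits of size j) of sigma on Omega.\<close>
definition cyc_orbit :: "('b \<Rightarrow> 'b) \<Rightarrow> 'b \<Rightarrow> 'b set" where
  "cyc_orbit \<sigma> x = {(\<sigma> ^^ n) x | n. True}"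

definition cycle_type :: "'b set \<Rightarrow> ('b \<Rightarrow> 'b) \<Rightarrow> nat \<Rightarrow> nat" where
  "cycle_type \<Omega> \<sigma> j = card {C. \<exists>x\<in>\<Omega>. C = cyc_orbit \<sigma> x \<and> card C = j}"

definition aff :: "nat \<Rightarrow> 'a::comm_ring_1 mat \<Rightarrow> 'a vec \<Rightarrow> 'a vec \<Rightarrow> 'a vec" where
  "aff d M v x = vec d (\<lambda>j. (\<Sum>i<d. x $ i * M $$ (i, j)) + v $ j)"

definition GL :: "nat \<Rightarrow> 'a::comm_ring_1 mat set" where
  "GL d = {M. M \<in> carrier_mat d d \<and> invertible_mat M}"

definition CGL :: "nat \<Rightarrow> 'a::comm_ring_1 mat set" where
  "CGL d = {A. A \<in> GL d \<and> \<not> eigenvalue A (-1)}"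

definition CGL_pow :: "nat \<Rightarrow> nat \<Rightarrow> 'a::comm_ring_1 mat set" where
  "CGL_pow d l = {foldr (*) As (1\<^sub>m d) | As. length As = l \<and> set As \<subseteq> CGL d}"

definition CT_aff :: "nat \<Rightarrow> 'a::comm_ring_1 mat set \<Rightarrow> (nat \<Rightarrow> nat) set" where
  "CT_aff d Ms = {cycle_type (carrier_vec d) (aff d M v) | M v. M \<in> Ms \<and> v \<in> carrier_vec d}"

definition x1_3 :: "nat \<Rightarrow> nat" where "x1_3 = (\<lambda>j. if j = 1 then 3 else 0)"
definition x3 :: "nat \<Rightarrow> nat" where "x3 = (\<lambda>j. if j = 3 then 1 else 0)"
definition x1_4 :: "nat \<Rightarrow> nat" where "x1_4 = (\<lambda>j. if j = 1 then 4 else 0)"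
definition x2_2 :: "nat \<Rightarrow> nat" where "x2_2 = (\<lambda>j. if j = 2 then 2 else 0)"
definition x1x3 :: "nat \<Rightarrow> nat" where "x1x3 = (\<lambda>j. if j = 1 \<or> j = 3 then 1 else 0)"

text \<open>Gamma(d,p,l) with F_p = 'a mod_ring, p = CARD('a).\<close>
definition Gamma :: "'a::prime_card itself \<Rightarrow> nat \<Rightarrow> nat \<Rightarrow> (nat \<Rightarrow> nat) set" where
  "Gamma _ d l =
    (if l = 1 then CT_aff d (CGL d :: 'a mod_ring mat set)
     else if (d, CARD('a)) = (1, 2) then {}
     else if (d, CARD('a)) = (1, 3) then {x1_3, x3}
     else if (d, CARD('a)) = (2, 2) then {x1_4, x2_2, x1x3}
     else CT_aff d (GL d :: 'a mod_ring mat set))"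

end

theory Submission
  imports Defs "Jordan_Normal_Form.Column_Operations" "Berlekamp_Zassenhaus.Berlekamp_Type_Based"
begin

text \<open>An invertible \<open>M\<close> is a product \<open>A E\<close> of two
  matrices without eigenvalue \<open>-1\<close> as soon as some such \<open>E\<close> makes \<open>E + M\<close> invertible
  (take \<open>A = M E\<^sup>-\<^sup>1\<close>, then \<open>A + 1 = (M + E) E\<^sup>-\<^sup>1\<close>); since the identity is such a product,
  \<open>CGL\<^sub>d(p)\<^sup>(\<^sup>\<ell>\<^sup>) = GL\<^sub>d(p)\<close> for all \<open>\<ell> \<ge> 2\<close> once every \<open>d \<times> d\<close> matrix admits such an \<open>E\<close>.
  This property is invariant under similarity and passes to block lower triangular matrices
  through a Schur complement, which reduces it to \<open>1 \<times> 1\<close> blocks when \<open>p \<ge> 5\<close>, to blocks of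
  size 2 and 3 when \<open>p = 3\<close>, and to blocks of size 3, 4 and 5 when \<open>p = 2\<close>; those are settled
  by explicit witnesses and case distinctions. In the three exceptional cases
  \<open>CGL\<^sub>d(p)\<^sup>(\<^sup>\<ell>\<^sup>)\<close> is computed directly (it is empty, trivial, resp. cyclic of order 3) and the
  cycle types of the resulting affine maps are counted.\<close>

section \<open>Products of matrices without eigenvalue \<open>-1\<close>\<close>

lemma invertible_mat_iff_det_ne_0:
  fixes A :: "'a::field mat"
  assumes A: "A \<in> carrier_mat n n"
  shows "invertible_mat A \<longleftrightarrow> det A \<noteq> 0"
proof
  assume "invertible_mat A"
  then obtain B where AB: "A * B = 1\<^sub>m n" and BA: "B * A = 1\<^sub>m (dim_row B)"
    using A unfolding invertible_mat_def inverts_mat_def by auto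
  have "dim_row B = n" using arg_cong[OF BA, of dim_col] A by simp
  moreover have "dim_col B = n" using arg_cong[OF AB, of dim_col] by simp
  ultimately have B: "B \<in> carrier_mat n n" by auto
  from arg_cong[OF AB, of det] det_mult[OF A B] show "det A \<noteq> 0" by auto
next
  assume "det A \<noteq> 0"
  from det_non_zero_imp_unit[OF A this, of undefined]
  obtain B where B: "B \<in> carrier_mat n n" and AB: "A * B = 1\<^sub>m n" and BA: "B * A = 1\<^sub>m n"
    unfolding Units_def ring_mat_def by auto
  show "invertible_mat A" unfolding invertible_mat_def inverts_mat_def
    using A B AB BA by (intro conjI exI[of _ B]) auto
qed

lemma GL_eq_det: "GL d = {A :: 'a::field mat. A \<in> carrier_mat d d \<and> det A \<noteq> 0}"
  unfolding GL_def using invertible_mat_iff_det_ne_0 by blast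

lemma CGL_eq_det:
  "CGL d = {A :: 'a::field mat. A \<in> carrier_mat d d \<and> det A \<noteq> 0 \<and> det (A + 1\<^sub>m d) \<noteq> 0}"
proof -
  have "eigenvalue A (-1) \<longleftrightarrow> det (A + 1\<^sub>m d) = 0" if "A \<in> carrier_mat d d" for A :: "'a mat"
  proof -
    have "1 \<cdot>\<^sub>m 1\<^sub>m d = (1\<^sub>m d :: 'a mat)" by (rule eq_matI) auto
    thus ?thesis using eigenvalue_det[OF that] that unfolding char_matrix_def by simp
  qed
  thus ?thesis unfolding CGL_def GL_eq_det by auto
qed

lemma CGL_subset_GL: "CGL d \<subseteq> GL d"
  unfolding CGL_def by auto

lemma GL_mult_closed:
  fixes A B :: "'a::field mat"
  shows "A \<in> GL d \<Longrightarrow> B \<in> GL d \<Longrightarrow> A * B \<in> GL d"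
  unfolding GL_eq_det using det_mult[of A d B] by auto

lemma CGL_pow_0: "CGL_pow d 0 = {1\<^sub>m d}"
  unfolding CGL_pow_def by auto

lemma CGL_pow_Suc:
  "CGL_pow d (Suc l) = {A * X | A X. A \<in> CGL d \<and> X \<in> (CGL_pow d l :: 'a::comm_ring_1 mat set)}"
proof (rule Set.set_eqI, rule iffI)
  fix M :: "'a mat" assume "M \<in> CGL_pow d (Suc l)"
  then obtain As where As: "length As = Suc l" "set As \<subseteq> CGL d" and M: "M = foldr (*) As (1\<^sub>m d)"
    unfolding CGL_pow_def by auto
  then obtain A Bs where "As = A # Bs" by (cases As) auto
  thus "M \<in> {A * X | A X. A \<in> CGL d \<and> X \<in> CGL_pow d l}" using As M unfolding CGL_pow_def by auto
next
  fix M :: "'a mat" assume "M \<in> {A * X | A X. A \<in> CGL d \<and> X \<in> CGL_pow d l}"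
  then obtain A Bs where "A \<in> CGL d" "length Bs = l" "set Bs \<subseteq> CGL d" "M = A * foldr (*) Bs (1\<^sub>m d)"
    unfolding CGL_pow_def by auto
  thus "M \<in> CGL_pow d (Suc l)" unfolding CGL_pow_def by (intro CollectI exI[of _ "A # Bs"]) auto
qed

lemma CGL_pow_1: "CGL_pow d 1 = (CGL d :: 'a::field mat set)"
proof -
  have "A * 1\<^sub>m d = A" if "A \<in> CGL d" for A :: "'a mat" using that unfolding CGL_eq_det by auto
  thus ?thesis unfolding One_nat_def CGL_pow_Suc CGL_pow_0 by force
qed

lemma CGL_pow_2: "CGL_pow d 2 = {A * X | A X. A \<in> CGL d \<and> X \<in> (CGL d :: 'a::field mat set)}"
  using CGL_pow_Suc[of d 1, where 'a='a] CGL_pow_1[of d, where 'a='a] by (simp add: numeral_2_eq_2)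

lemma CGL_pow_subset_GL: "CGL_pow d l \<subseteq> (GL d :: 'a::field mat set)"
proof (induction l)
  case 0 show ?case unfolding CGL_pow_0 GL_eq_det by auto
next
  case (Suc l) thus ?case unfolding CGL_pow_Suc using CGL_subset_GL GL_mult_closed by blast
qed

definition cgl_shiftable :: "nat \<Rightarrow> 'a::field mat \<Rightarrow> bool" where
  "cgl_shiftable n N \<longleftrightarrow> (\<exists>E \<in> CGL n. det (E + N) \<noteq> 0)"

lemma cgl_shiftableI:
  "E \<in> carrier_mat n n \<Longrightarrow> det E \<noteq> 0 \<Longrightarrow> det (E + 1\<^sub>m n) \<noteq> 0 \<Longrightarrow> det (E + N) \<noteq> 0
    \<Longrightarrow> cgl_shiftable n N"
  unfolding cgl_shiftable_def CGL_eq_det by auto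

lemma GL_factor_CGL:
  fixes M :: "'a::field mat"
  assumes M: "M \<in> GL d" and shift: "cgl_shiftable d M"
  shows "\<exists>A \<in> CGL d. \<exists>E \<in> CGL d. M = A * E"
proof -
  from M have Mc: "M \<in> carrier_mat d d" and dM: "det M \<noteq> 0" unfolding GL_eq_det by auto
  from shift obtain E where ECGL: "E \<in> CGL d" and dEM: "det (E + M) \<noteq> 0"
    unfolding cgl_shiftable_def by auto
  hence E: "E \<in> carrier_mat d d" and dE: "det E \<noteq> 0" unfolding CGL_eq_det by auto
  from det_non_zero_imp_unit[OF E dE, of undefined] obtain F where F: "F \<in> carrier_mat d d"
    and EF: "E * F = 1\<^sub>m d" and FE: "F * E = 1\<^sub>m d"
    unfolding Units_def ring_mat_def by auto
  have dF: "det F \<noteq> 0" using arg_cong[OF EF, of det] det_mult[OF E F] by auto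
  define A where "A = M * F"
  have A: "A \<in> carrier_mat d d" unfolding A_def using Mc F by auto
  have "A * E = M * (F * E)" unfolding A_def using Mc F E by simp
  hence AE: "M = A * E" using FE Mc by simp
  have "(E + M) * F = 1\<^sub>m d + A"
    unfolding A_def using Mc E F EF by (simp add: add_mult_distrib_mat)
  hence "A + 1\<^sub>m d = (E + M) * F" using comm_add_mat[OF A, of "1\<^sub>m d"] by simp
  hence "det (A + 1\<^sub>m d) \<noteq> 0" using det_mult[of "E + M" d F] Mc E F dEM dF by simp
  moreover have "det A \<noteq> 0" unfolding A_def using det_mult[OF Mc F] dM dF by auto
  ultimately have "A \<in> CGL d" unfolding CGL_eq_det using A by auto
  with ECGL AE show ?thesis by blast
qed

text \<open>The identity is a product \<open>C B\<close> in \<open>CGL\<close>, so \<open>M = C (B M)\<close> lengthens factorisations.\<close>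
lemma CGL_pow_eq_GL:
  fixes d :: nat
  assumes shift: "\<And>M :: 'a::field mat. M \<in> carrier_mat d d \<Longrightarrow> cgl_shiftable d M" and l: "2 \<le> l"
  shows "CGL_pow d l = (GL d :: 'a mat set)"
  using l
proof (induction l rule: dec_induct)
  case base
  show ?case
  proof (intro equalityI CGL_pow_subset_GL subsetI)
    fix M :: "'a mat" assume M: "M \<in> GL d"
    with GL_factor_CGL[OF M shift] obtain A E where "A \<in> CGL d" "E \<in> CGL d" "M = A * E"
      unfolding GL_eq_det by auto
    thus "M \<in> CGL_pow d 2" unfolding CGL_pow_2 by blast
  qed
next
  case (step l)
  show ?case
  proof (intro equalityI CGL_pow_subset_GL subsetI)
    fix M :: "'a mat" assume M: "M \<in> GL d"
    have I: "(1\<^sub>m d :: 'a mat) \<in> GL d" unfolding GL_eq_det by auto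
    from GL_factor_CGL[OF I shift] obtain C B :: "'a mat"
      where CB: "C \<in> CGL d" "B \<in> CGL d" "1\<^sub>m d = C * B" by auto
    have C: "C \<in> carrier_mat d d" and B: "B \<in> carrier_mat d d" and Mc: "M \<in> carrier_mat d d"
      using CB M unfolding CGL_eq_det GL_eq_det by auto
    have "C * (B * M) = (C * B) * M" using C B Mc by (simp add: assoc_mult_mat[of C d d B d M d])
    also have "\<dots> = M" using Mc by (simp add: CB(3)[symmetric])
    finally have "C * (B * M) = M" .
    moreover have "B \<in> GL d" using CB(2) CGL_subset_GL by blast
    hence "B * M \<in> CGL_pow d l" using step.IH GL_mult_closed M by blast
    ultimately have "M = C * (B * M) \<and> C \<in> CGL d \<and> B * M \<in> CGL_pow d l" using CB(1) by simp
    thus "M \<in> CGL_pow d (Suc l)" unfolding CGL_pow_Suc by blast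
  qed
qed

section \<open>Reduction to small blocks\<close>

lemma cgl_shiftable_similar:
  fixes N :: "'a::field mat"
  assumes sim: "similar_mat N N'" and N: "N \<in> carrier_mat n n" and shift: "cgl_shiftable n N'"
  shows "cgl_shiftable n N"
proof -
  from similar_matD[OF sim] obtain m P Q where carr: "{N, N', P, Q} \<subseteq> carrier_mat m m"
    and PQ: "P * Q = 1\<^sub>m m" and QP: "Q * P = 1\<^sub>m m" and NPQ: "N = P * N' * Q" by blast
  have "m = n" using carr N by auto
  with carr have N': "N' \<in> carrier_mat n n" and P: "P \<in> carrier_mat n n" and Q: "Q \<in> carrier_mat n n"
    and PQ: "P * Q = 1\<^sub>m n" and QP: "Q * P = 1\<^sub>m n" using PQ QP by auto
  have det_conj: "det (P * X * Q) = det X" if "X \<in> carrier_mat n n" for X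
    by (rule det_similar, rule similar_matI[of _ _ P Q n]) (use that P Q PQ QP in simp_all)
  have add_conj: "P * X * Q + P * Y * Q = P * (X + Y) * Q"
    if "X \<in> carrier_mat n n" "Y \<in> carrier_mat n n" for X Y
  proof -
    have "P * (X + Y) = P * X + P * Y" using that P by (simp add: mult_add_distrib_mat)
    thus ?thesis using that P Q by (simp add: add_mult_distrib_mat[of _ n n])
  qed
  from shift obtain E' where E': "E' \<in> carrier_mat n n" "det E' \<noteq> 0" "det (E' + 1\<^sub>m n) \<noteq> 0"
    and dE'N': "det (E' + N') \<noteq> 0" unfolding cgl_shiftable_def CGL_eq_det by auto
  have one: "P * 1\<^sub>m n * Q = 1\<^sub>m n" using P PQ by simp
  show ?thesis
  proof (rule cgl_shiftableI[of "P * E' * Q"])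
    show "P * E' * Q \<in> carrier_mat n n" using P E' Q by auto
    show "det (P * E' * Q) \<noteq> 0" using det_conj E' by simp
    have "P * E' * Q + 1\<^sub>m n = P * (E' + 1\<^sub>m n) * Q"
      using add_conj[of E' "1\<^sub>m n"] E' one by simp
    thus "det (P * E' * Q + 1\<^sub>m n) \<noteq> 0" using det_conj[of "E' + 1\<^sub>m n"] E' by simp
    have "P * E' * Q + N = P * (E' + N') * Q" using add_conj[OF E'(1) N'] NPQ by simp
    thus "det (P * E' * Q + N) \<noteq> 0" using det_conj[of "E' + N'"] E' N' dE'N' by simp
  qed
qed

lemma sum_delta_mult:
  fixes f :: "nat \<Rightarrow> 'a::semiring_1"
  assumes "j < n"
  shows "(\<Sum>k<n. (if k = j then 1 else 0) * f k) = f j" "(\<Sum>k<n. f k * (if k = j then 1 else 0)) = f j"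
  using assms by (simp_all add: if_distrib[of "\<lambda>x. x * _"] if_distrib[of "\<lambda>x. _ * x"] cong: if_cong)

lemma similar_mat_permute:
  fixes N :: "'a::field mat"
  assumes N: "N \<in> carrier_mat n n" and \<sigma>: "bij_betw \<sigma> {..<n} {..<n}"
  shows "similar_mat N (mat n n (\<lambda>(i,j). N $$ (\<sigma> i, \<sigma> j)))"
proof -
  have \<sigma>_lt: "\<sigma> i < n" if "i < n" for i using \<sigma> that by (auto dest: bij_betwE)
  define P :: "'a mat" where "P = mat n n (\<lambda>(i,k). if k = \<sigma> i then 1 else 0)"
  define Q :: "'a mat" where "Q = mat n n (\<lambda>(k,j). if k = \<sigma> j then 1 else 0)"
  have P: "P \<in> carrier_mat n n" and Q: "Q \<in> carrier_mat n n" unfolding P_def Q_def by auto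
  have P_mult: "(P * X) $$ (i,j) = X $$ (\<sigma> i, j)" if "X \<in> carrier_mat n m" "i < n" "j < m" for X m i j
  proof -
    have "(P * X) $$ (i,j) = (\<Sum>k<n. (if k = \<sigma> i then 1 else 0) * X $$ (k,j))"
      using that unfolding P_def by (auto simp: scalar_prod_def atLeast0LessThan intro!: sum.cong)
    also have "\<dots> = X $$ (\<sigma> i, j)" by (rule sum_delta_mult(1)[OF \<sigma>_lt[OF that(2)]])
    finally show ?thesis .
  qed
  have mult_Q: "(X * Q) $$ (i,j) = X $$ (i, \<sigma> j)" if "X \<in> carrier_mat m n" "i < m" "j < n" for X m i j
  proof -
    have "(X * Q) $$ (i,j) = (\<Sum>k<n. X $$ (i,k) * (if k = \<sigma> j then 1 else 0))"
      using that unfolding Q_def by (auto simp: scalar_prod_def atLeast0LessThan intro!: sum.cong)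
    also have "\<dots> = X $$ (i, \<sigma> j)" by (rule sum_delta_mult(2)[OF \<sigma>_lt[OF that(3)]])
    finally show ?thesis .
  qed
  have PQ: "P * Q = 1\<^sub>m n"
  proof (rule eq_matI)
    fix i j assume "i < dim_row (1\<^sub>m n :: 'a mat)" "j < dim_col (1\<^sub>m n :: 'a mat)"
    hence ij: "i < n" "j < n" by auto
    have "\<sigma> i = \<sigma> j \<longleftrightarrow> i = j" using \<sigma> ij by (auto dest: bij_betw_imp_inj_on inj_onD)
    thus "(P * Q) $$ (i,j) = 1\<^sub>m n $$ (i,j)" using P_mult[OF Q ij] \<sigma>_lt ij unfolding Q_def by auto
  qed (use P Q in auto)
  have QP: "Q * P = 1\<^sub>m n" by (rule mat_mult_left_right_inverse[OF P Q PQ])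
  have "P * N * Q = mat n n (\<lambda>(i,j). N $$ (\<sigma> i, \<sigma> j))"
  proof (rule eq_matI)
    fix i j assume "i < dim_row (mat n n (\<lambda>(i,j). N $$ (\<sigma> i, \<sigma> j)))"
      "j < dim_col (mat n n (\<lambda>(i,j). N $$ (\<sigma> i, \<sigma> j)))"
    hence ij: "i < n" "j < n" by auto
    have "(P * N * Q) $$ (i,j) = (P * N) $$ (i, \<sigma> j)" using mult_Q[of "P * N" n i j] P N ij by auto
    also have "\<dots> = N $$ (\<sigma> i, \<sigma> j)" using P_mult[OF N ij(1) \<sigma>_lt[OF ij(2)]] .
    finally show "(P * N * Q) $$ (i,j) = mat n n (\<lambda>(i,j). N $$ (\<sigma> i, \<sigma> j)) $$ (i,j)" using ij by simp
  qed (use P N Q in auto)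
  hence "similar_mat (mat n n (\<lambda>(i,j). N $$ (\<sigma> i, \<sigma> j))) N"
    using P Q N PQ QP by (intro similar_matI[of _ _ P Q n]) auto
  thus ?thesis by (rule similar_mat_sym)
qed

lemma cgl_shiftable_permute:
  fixes N :: "'a::field mat"
  assumes N: "N \<in> carrier_mat n n" and L: "distinct L" "length L = n" "set L \<subseteq> {..<n}"
    and shift: "cgl_shiftable n (mat n n (\<lambda>(i,j). N $$ (L ! i, L ! j)))"
  shows "cgl_shiftable n N"
proof -
  have "set L = {..<n}" by (rule card_subset_eq) (use L distinct_card in auto)
  hence "bij_betw ((!) L) {..<n} {..<n}" using L by (intro bij_betw_nth) auto
  from cgl_shiftable_similar[OF similar_mat_permute[OF N this] N shift] show ?thesis .
qed

text \<open>The witness \<open>E = [E\<^sub>1, X; 0, E\<^sub>2]\<close> with \<open>X = (E\<^sub>1 + N\<^sub>1) Z - N\<^sub>2\<close> factors as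
  \<open>E + N = [E\<^sub>1 + N\<^sub>1, 0; N\<^sub>3, 1] [1, Z; 0, E\<^sub>2 + N\<^sub>4 - N\<^sub>3 Z]\<close>.\<close>
lemma cgl_shiftable_four_block:
  fixes N1 :: "'a::field mat"
  assumes N1: "N1 \<in> carrier_mat k k" and N2: "N2 \<in> carrier_mat k m"
    and N3: "N3 \<in> carrier_mat m k" and N4: "N4 \<in> carrier_mat m m"
    and Z: "Z \<in> carrier_mat k m"
    and shift1: "cgl_shiftable k N1" and shift2: "cgl_shiftable m (N4 - N3 * Z)"
  shows "cgl_shiftable (k + m) (four_block_mat N1 N2 N3 N4)"
proof -
  from shift1 obtain E1 where E1: "E1 \<in> carrier_mat k k" and d1: "det E1 \<noteq> 0" "det (E1 + 1\<^sub>m k) \<noteq> 0"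
    "det (E1 + N1) \<noteq> 0" unfolding cgl_shiftable_def CGL_eq_det by auto
  from shift2 obtain E2 where E2: "E2 \<in> carrier_mat m m" and d2: "det E2 \<noteq> 0" "det (E2 + 1\<^sub>m m) \<noteq> 0"
    "det (E2 + (N4 - N3 * Z)) \<noteq> 0" unfolding cgl_shiftable_def CGL_eq_det by auto
  define A where "A = E1 + N1"
  have A: "A \<in> carrier_mat k k" using E1 N1 unfolding A_def by auto
  define X where "X = A * Z - N2"
  have X: "X \<in> carrier_mat k m" using A Z N2 unfolding X_def by auto
  define E where "E = four_block_mat E1 X (0\<^sub>m m k) E2"
  have E: "E \<in> carrier_mat (k + m) (k + m)" unfolding E_def using E1 E2 by auto
  have "det E = det E1 * det E2" unfolding E_def
    by (rule det_four_block_mat_lower_left_zero[OF E1 X refl E2])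
  hence dE: "det E \<noteq> 0" using d1 d2 by auto
  have "E + 1\<^sub>m (k + m) = four_block_mat (E1 + 1\<^sub>m k) (X + 0\<^sub>m k m) (0\<^sub>m m k + 0\<^sub>m m k) (E2 + 1\<^sub>m m)"
    unfolding E_def four_block_one_mat[symmetric]
    by (rule add_four_block_mat) (use E1 E2 X in auto)
  also have "\<dots> = four_block_mat (E1 + 1\<^sub>m k) X (0\<^sub>m m k) (E2 + 1\<^sub>m m)" using X by simp
  finally have "det (E + 1\<^sub>m (k + m)) = det (E1 + 1\<^sub>m k) * det (E2 + 1\<^sub>m m)"
    by (simp add: det_four_block_mat_lower_left_zero[of _ k X m] E1 E2 X)
  hence dE1: "det (E + 1\<^sub>m (k + m)) \<noteq> 0" using d1 d2 by auto
  have "E + four_block_mat N1 N2 N3 N4 = four_block_mat (E1 + N1) (X + N2) (0\<^sub>m m k + N3) (E2 + N4)"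
    unfolding E_def by (rule add_four_block_mat) (use E1 E2 X N1 N2 N3 N4 in auto)
  also have "X + N2 = A * Z" unfolding X_def using A Z N2 by auto
  also have "0\<^sub>m m k + N3 = N3" using N3 by simp
  also have "E2 + N4 = N3 * Z + (E2 + (N4 - N3 * Z))" using N3 Z E2 N4 by auto
  also have "four_block_mat (E1 + N1) (A * Z) N3 (N3 * Z + (E2 + (N4 - N3 * Z)))
     = four_block_mat A (0\<^sub>m k m) N3 (1\<^sub>m m) * four_block_mat (1\<^sub>m k) Z (0\<^sub>m m k) (E2 + (N4 - N3 * Z))"
    unfolding A_def[symmetric]
    by (subst mult_four_block_mat[of _ k k _ m _ m]) (use A N3 Z E2 N4 in auto)
  finally have factor: "E + four_block_mat N1 N2 N3 N4 =
    four_block_mat A (0\<^sub>m k m) N3 (1\<^sub>m m) * four_block_mat (1\<^sub>m k) Z (0\<^sub>m m k) (E2 + (N4 - N3 * Z))" .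
  have "det (E + four_block_mat N1 N2 N3 N4) =
     det (four_block_mat A (0\<^sub>m k m) N3 (1\<^sub>m m)) * det (four_block_mat (1\<^sub>m k) Z (0\<^sub>m m k) (E2 + (N4 - N3 * Z)))"
    unfolding factor by (rule det_mult[of _ "k + m"]) (use A N3 Z E2 N4 in auto)
  also have "det (four_block_mat A (0\<^sub>m k m) N3 (1\<^sub>m m)) = det A * det (1\<^sub>m m :: 'a mat)"
    by (rule det_four_block_mat_upper_right_zero[OF A refl N3]) simp
  also have "det (four_block_mat (1\<^sub>m k) Z (0\<^sub>m m k) (E2 + (N4 - N3 * Z)))
      = det (1\<^sub>m k :: 'a mat) * det (E2 + (N4 - N3 * Z))"
    by (rule det_four_block_mat_lower_left_zero[OF _ Z refl]) (use E2 N4 N3 Z in auto)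
  finally have "det (E + four_block_mat N1 N2 N3 N4) \<noteq> 0" using d1 d2 unfolding A_def by simp
  with E dE dE1 show ?thesis by (intro cgl_shiftableI)
qed

lemma cgl_shiftable_split:
  fixes N :: "'a::field mat"
  assumes N: "N \<in> carrier_mat (k + m) (k + m)" and Z: "Z \<in> carrier_mat k m"
    and shift1: "cgl_shiftable k (mat k k (\<lambda>(i,j). N $$ (i,j)))"
    and shift2: "cgl_shiftable m (mat m m (\<lambda>(i,j). N $$ (k + i, k + j)) - mat m k (\<lambda>(i,j). N $$ (k + i, j)) * Z)"
  shows "cgl_shiftable (k + m) N"
proof -
  have "N = four_block_mat (mat k k (\<lambda>(i,j). N $$ (i,j))) (mat k m (\<lambda>(i,j). N $$ (i, k + j)))
     (mat m k (\<lambda>(i,j). N $$ (k + i, j))) (mat m m (\<lambda>(i,j). N $$ (k + i, k + j)))"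
    by (rule eq_matI) (use N in auto)
  also have "cgl_shiftable (k + m) \<dots>"
    by (rule cgl_shiftable_four_block[OF _ _ _ _ Z shift1 shift2]) auto
  finally show ?thesis .
qed

lemma cgl_shiftable_split_Z0:
  fixes N :: "'a::field mat"
  assumes N: "N \<in> carrier_mat (k + m) (k + m)"
    and "cgl_shiftable k (mat k k (\<lambda>(i,j). N $$ (i,j)))"
    and "cgl_shiftable m (mat m m (\<lambda>(i,j). N $$ (k + i, k + j)))"
  shows "cgl_shiftable (k + m) N"
proof -
  have "mat m m (\<lambda>(i,j). N $$ (k + i, k + j)) - mat m k (\<lambda>(i,j). N $$ (k + i, j)) * 0\<^sub>m k m
      = mat m m (\<lambda>(i,j). N $$ (k + i, k + j))"
    by (rule eq_matI) auto
  with cgl_shiftable_split[OF N zero_carrier_mat[of k m]] assms show ?thesis by simp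
qed

lemma cgl_shiftable_0: "N \<in> carrier_mat 0 0 \<Longrightarrow> cgl_shiftable 0 (N :: 'a::field mat)"
  by (rule cgl_shiftableI[of "1\<^sub>m 0"]) auto

lemma cgl_shiftable_1I:
  fixes N :: "'a::field mat"
  assumes "e \<noteq> 0" "e + 1 \<noteq> 0" "e + N $$ (0,0) \<noteq> 0" "N \<in> carrier_mat 1 1"
  shows "cgl_shiftable 1 N"
  by (rule cgl_shiftableI[of "mat 1 1 (\<lambda>_. e)"]) (use assms in \<open>auto simp: det_single\<close>)

lemma cgl_shiftable_two_three_nonzero:
  fixes N :: "'a::field mat"
  assumes two: "(2::'a) \<noteq> 0" and three: "(3::'a) \<noteq> 0" and N: "N \<in> carrier_mat n n"
  shows "cgl_shiftable n N"
  using N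
proof (induction n arbitrary: N)
  case 0 thus ?case by (rule cgl_shiftable_0)
next
  case (Suc n)
  have N: "N \<in> carrier_mat (1 + n) (1 + n)" using Suc.prems by simp
  have "cgl_shiftable 1 (mat 1 1 (\<lambda>(i,j). N $$ (i,j)))"
  proof (cases "1 + N $$ (0,0) = 0")
    case True
    have "2 + N $$ (0,0) = 1 + (1 + N $$ (0,0))" by (metis add.assoc one_add_one)
    also have "\<dots> = 1" using True by simp
    finally have "2 + N $$ (0,0) \<noteq> 0" by (metis one_neq_zero)
    moreover have "(2::'a) + 1 \<noteq> 0" using three by simp
    ultimately show ?thesis using two by (intro cgl_shiftable_1I[of 2]) auto
  next
    case False
    thus ?thesis using two by (intro cgl_shiftable_1I[of 1]) auto
  qed
  moreover have "cgl_shiftable n (mat n n (\<lambda>(i,j). N $$ (1 + i, 1 + j)))" by (rule Suc.IH) auto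
  ultimately show ?case using cgl_shiftable_split_Z0[OF N] by simp
qed

lemma det_2x2:
  assumes "A \<in> carrier_mat 2 2"
  shows "det A = A $$ (0,0) * A $$ (1,1) - A $$ (0,1) * A $$ (1,0)"
proof -
  have "det A = (\<Sum>j<2. A $$ (0,j) * cofactor A 0 j)" by (rule laplace_expansion_row[OF assms]) simp
  also have "\<dots> = A $$ (0,0) * cofactor A 0 0 + A $$ (0,1) * cofactor A 0 1"
    by (simp add: numeral_2_eq_2 lessThan_Suc)
  also have "cofactor A 0 0 = A $$ (1,1)" unfolding cofactor_def using assms
    by (subst det_single) (auto simp: mat_delete_def)
  also have "cofactor A 0 1 = - A $$ (1,0)" unfolding cofactor_def using assms
    by (subst det_single) (auto simp: mat_delete_def)
  finally show ?thesis by (simp add: algebra_simps)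
qed

lemma det_3x3:
  assumes A: "A \<in> carrier_mat 3 3"
  shows "det A = A $$ (0,0) * (A $$ (1,1) * A $$ (2,2) - A $$ (1,2) * A $$ (2,1))
     - A $$ (0,1) * (A $$ (1,0) * A $$ (2,2) - A $$ (1,2) * A $$ (2,0))
     + A $$ (0,2) * (A $$ (1,0) * A $$ (2,1) - A $$ (1,1) * A $$ (2,0))"
proof -
  have "det A = (\<Sum>j<3. A $$ (0,j) * cofactor A 0 j)" by (rule laplace_expansion_row[OF A]) simp
  also have "\<dots> = A $$ (0,0) * cofactor A 0 0 + A $$ (0,1) * cofactor A 0 1 + A $$ (0,2) * cofactor A 0 2"
    by (simp add: numeral_3_eq_3 lessThan_Suc numeral_2_eq_2)
  also have "cofactor A 0 0 = A $$ (1,1) * A $$ (2,2) - A $$ (1,2) * A $$ (2,1)"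
    unfolding cofactor_def using A by (subst det_2x2) (auto simp: mat_delete_def numeral_2_eq_2)
  also have "cofactor A 0 1 = - (A $$ (1,0) * A $$ (2,2) - A $$ (1,2) * A $$ (2,0))"
    unfolding cofactor_def using A by (subst det_2x2) (auto simp: mat_delete_def numeral_2_eq_2)
  also have "cofactor A 0 2 = A $$ (1,0) * A $$ (2,1) - A $$ (1,1) * A $$ (2,0)"
    unfolding cofactor_def using A by (subst det_2x2) (auto simp: mat_delete_def numeral_2_eq_2)
  finally show ?thesis by (simp add: algebra_simps)
qed

definition mat2 :: "'a \<Rightarrow> 'a \<Rightarrow> 'a \<Rightarrow> 'a \<Rightarrow> 'a mat" where
  "mat2 a b c d = mat 2 2 (\<lambda>(i,j). [[a, b], [c, d]] ! i ! j)"

definition mat3 :: "'a \<Rightarrow> 'a \<Rightarrow> 'a \<Rightarrow> 'a \<Rightarrow> 'a \<Rightarrow> 'a \<Rightarrow> 'a \<Rightarrow> 'a \<Rightarrow> 'a \<Rightarrow> 'a mat" where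
  "mat3 a b c d e f g h i = mat 3 3 (\<lambda>(r,s). [[a, b, c], [d, e, f], [g, h, i]] ! r ! s)"

lemma mat2_carrier [simp]: "mat2 a b c d \<in> carrier_mat 2 2"
  unfolding mat2_def by simp

lemma mat3_carrier [simp]: "mat3 a b c d e f g h i \<in> carrier_mat 3 3"
  unfolding mat3_def by simp

lemma mat2_index [simp]:
  "mat2 a b c d $$ (0,0) = a" "mat2 a b c d $$ (0,1) = b" "mat2 a b c d $$ (1,0) = c" "mat2 a b c d $$ (1,1) = d"
  "mat2 a b c d $$ (0,Suc 0) = b" "mat2 a b c d $$ (Suc 0,0) = c" "mat2 a b c d $$ (Suc 0,Suc 0) = d"
  unfolding mat2_def by auto

lemma mat2_cases: "M \<in> carrier_mat 2 2 \<Longrightarrow> M = mat2 (M $$ (0,0)) (M $$ (0,1)) (M $$ (1,0)) (M $$ (1,1))"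
  by (rule eq_matI) (auto simp: mat2_def less_2_cases_iff)

lemma mat3_cases:
  assumes "M \<in> carrier_mat 3 3"
  shows "M = mat3 (M $$ (0,0)) (M $$ (0,1)) (M $$ (0,2)) (M $$ (1,0)) (M $$ (1,1)) (M $$ (1,2))
    (M $$ (2,0)) (M $$ (2,1)) (M $$ (2,2))"
  by (rule eq_matI) (use assms in \<open>auto simp: mat3_def numeral_3_eq_3 numeral_2_eq_2 less_Suc_eq\<close>)

lemma mat2_eq_iff [simp]: "mat2 a b c d = mat2 a' b' c' d' \<longleftrightarrow> a = a' \<and> b = b' \<and> c = c' \<and> d = d'"
  by (metis mat2_index(1-4))

lemma mat2_one: "1\<^sub>m 2 = mat2 1 0 0 (1 :: 'a::comm_ring_1)"
  by (rule eq_matI) (auto simp: mat2_def less_2_cases_iff)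

lemma mat3_one: "1\<^sub>m 3 = mat3 1 0 0 0 1 0 0 0 (1 :: 'a::comm_ring_1)"
  by (rule eq_matI) (auto simp: mat3_def numeral_3_eq_3 less_Suc_eq)

lemma mat2_plus: "mat2 a b c d + mat2 a' b' c' d' = mat2 (a + a') (b + b') (c + c') (d + d' :: 'a::plus)"
  by (rule eq_matI) (auto simp: mat2_def less_2_cases_iff)

lemma mat3_plus:
  "mat3 a b c d e f g h i + mat3 a' b' c' d' e' f' g' h' i'
    = mat3 (a + a') (b + b') (c + c') (d + d') (e + e') (f + f') (g + g') (h + h') (i + i' :: 'a::plus)"
  by (rule eq_matI) (auto simp: mat3_def numeral_3_eq_3 less_Suc_eq)

lemma mat2_mult:
  "mat2 a b c d * mat2 e f g h = mat2 (a*e + b*g) (a*f + b*h) (c*e + d*g) (c*f + d*h :: 'a::comm_ring_1)"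
  by (rule eq_matI) (auto simp: mat2_def less_Suc_eq scalar_prod_def numeral_2_eq_2 lessThan_Suc atLeast0LessThan)

lemma det_mat2: "det (mat2 a b c d) = a * d - b * (c :: 'a::comm_ring_1)"
  by (subst det_2x2) auto

lemma det_mat3:
  "det (mat3 a b c d e f g h i) = a * (e * i - f * h) - b * (d * i - f * g) + c * (d * h - e * (g :: 'a::comm_ring_1))"
  by (subst det_3x3) (auto simp: mat3_def)

lemma numeral_mod_ring_eq_0_iff: "(numeral k :: 'a::prime_card mod_ring) = 0 \<longleftrightarrow> CARD('a) dvd numeral k"
  using of_nat_eq_0_iff_char_dvd[of "numeral k", where 'a="'a mod_ring"] by simp

lemma mod_ring_cases_2:
  assumes "CARD('a::prime_card) = 2"
  shows "(x :: 'a mod_ring) = 0 \<or> x = 1"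
proof -
  obtain i where "i < CARD('a)" "x = of_nat i" using surj_of_nat_mod_ring by blast
  thus ?thesis using assms by (auto simp: less_Suc_eq numeral_eq_Suc)
qed

lemma mod_ring_cases_3:
  assumes "CARD('a::prime_card) = 3"
  shows "(x :: 'a mod_ring) = 0 \<or> x = 1 \<or> x = 2"
proof -
  obtain i where "i < CARD('a)" "x = of_nat i" using surj_of_nat_mod_ring by blast
  thus ?thesis using assms by (auto simp: less_Suc_eq numeral_eq_Suc)
qed

section \<open>Shiftability over \<open>\<bbbF>\<^sub>3\<close>\<close>

lemma cgl_shiftable_2x2_F3:
  fixes N :: "'a::prime_card mod_ring mat"
  assumes p: "CARD('a) = 3" and N: "N \<in> carrier_mat 2 2"
  shows "cgl_shiftable 2 N"
proof -
  let ?Es = "{mat2 0 1 1 1, mat2 0 2 2 1, mat2 1 0 0 1, mat2 1 1 1 0} :: 'a mod_ring mat set"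
  note F3 = numeral_mod_ring_eq_0_iff[where 'a='a, unfolded p]
  have "?Es \<subseteq> CGL 2" unfolding CGL_eq_det by (auto simp: det_mat2 mat2_one mat2_plus F3)
  moreover obtain a b c d where N_eq: "N = mat2 a b c d" using mat2_cases[OF N] by blast
  have "\<exists>E \<in> ?Es. det (E + N) \<noteq> 0"
    unfolding N_eq using mod_ring_cases_3[OF p, of a] mod_ring_cases_3[OF p, of b]
      mod_ring_cases_3[OF p, of c] mod_ring_cases_3[OF p, of d]
    by (elim disjE) (simp_all add: det_mat2 mat2_plus F3)
  ultimately show ?thesis unfolding cgl_shiftable_def by blast
qed

lemma mult_single_entry_mat:
  fixes A :: "'a::comm_ring_1 mat"
  assumes A: "A \<in> carrier_mat m k" and c: "c < k" and a: "a < m" and b: "b < l"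
  shows "(A * mat k l (\<lambda>(i,j). if i = c \<and> j = r then z else 0)) $$ (a,b) = (if b = r then A $$ (a,c) * z else 0)"
proof -
  have "(A * mat k l (\<lambda>(i,j). if i = c \<and> j = r then z else 0)) $$ (a,b)
      = (\<Sum>i<k. (A $$ (a,i) * (if b = r then z else 0)) * (if i = c then 1 else 0))"
    using A a b by (auto simp: scalar_prod_def atLeast0LessThan intro!: sum.cong)
  also have "\<dots> = A $$ (a,c) * (if b = r then z else 0)" by (rule sum_delta_mult(2)[OF c])
  finally show ?thesis by simp
qed

lemma cgl_shiftable_neg_one_3x3_F3:
  fixes N :: "'a::prime_card mod_ring mat"
  assumes p: "CARD('a) = 3" and N: "N = - 1\<^sub>m 3"
  shows "cgl_shiftable 3 N"
proof -
  note F3 = numeral_mod_ring_eq_0_iff[where 'a='a, unfolded p]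
  have "N = mat3 (-1) 0 0 0 (-1) 0 0 0 (-1)"
    unfolding N by (rule eq_matI) (auto simp: mat3_def numeral_3_eq_3 numeral_2_eq_2 less_Suc_eq)
  thus ?thesis
    by (intro cgl_shiftableI[of "mat3 0 0 1 1 0 1 0 1 0"]) (simp_all add: det_mat3 mat3_one mat3_plus F3)
qed

text \<open>Either a diagonal entry \<open>\<noteq> -1\<close> gives a shiftable \<open>1 \<times> 1\<close> block, or an off-diagonal
  entry lets a Schur complement vanish; only \<open>-1\<^sub>m 3\<close> remains.\<close>
lemma cgl_shiftable_3x3_F3:
  fixes N :: "'a::prime_card mod_ring mat"
  assumes p: "CARD('a) = 3" and N: "N \<in> carrier_mat 3 3"
  shows "cgl_shiftable 3 N"
proof -
  have two: "(1 :: 'a mod_ring) + 1 \<noteq> 0"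
    using numeral_mod_ring_eq_0_iff[where 'a='a and k="num.Bit0 num.One"] p by simp
  consider (diag) a where "a < 3" "N $$ (a,a) \<noteq> -1"
    | (off_diag) a b where "a < 3" "b < 3" "a \<noteq> b" "N $$ (a,b) \<noteq> 0"
    | (neg_one) "N = - 1\<^sub>m 3"
  proof (cases "(\<exists>a<3. N $$ (a,a) \<noteq> -1) \<or> (\<exists>a<3. \<exists>b<3. a \<noteq> b \<and> N $$ (a,b) \<noteq> 0)")
    case False
    hence "N = - 1\<^sub>m 3" by (intro eq_matI) (use N in auto)
    thus ?thesis using that(3) by blast
  qed (use that in blast)
  thus ?thesis
  proof cases
    case (diag a)
    define L where "L = a # filter (\<lambda>x. x \<noteq> a) [0..<3]"
    have L: "distinct L" "length L = 3" "set L \<subseteq> {..<3}" "L ! 0 = a"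
      using diag unfolding L_def by (auto simp: upt_rec less_Suc_eq numeral_eq_Suc)
    let ?N = "mat 3 3 (\<lambda>(i,j). N $$ (L ! i, L ! j)) :: 'a mod_ring mat"
    have "cgl_shiftable (1 + 2) ?N"
    proof (rule cgl_shiftable_split_Z0)
      have "1 + N $$ (a,a) \<noteq> 0" using diag by (metis add_eq_0_iff)
      thus "cgl_shiftable 1 (mat 1 1 (\<lambda>(i,j). ?N $$ (i,j)))"
        using L two by (intro cgl_shiftable_1I[of 1]) auto
    qed (auto intro: cgl_shiftable_2x2_F3[OF p])
    hence "cgl_shiftable 3 ?N" by (simp add: numeral_3_eq_3)
    thus ?thesis by (rule cgl_shiftable_permute[OF N L(1-3)])
  next
    case (off_diag a b)
    define L where "L = b # filter (\<lambda>x. x \<noteq> a \<and> x \<noteq> b) [0..<3] @ [a]"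
    have L: "distinct L" "length L = 3" "set L \<subseteq> {..<3}" "L ! 0 = b" "L ! 2 = a"
      using off_diag unfolding L_def by (auto simp: upt_rec less_Suc_eq numeral_eq_Suc)
    let ?N = "mat 3 3 (\<lambda>(i,j). N $$ (L ! i, L ! j)) :: 'a mod_ring mat"
    have N': "?N \<in> carrier_mat (2 + 1) (2 + 1)" by simp
    define Z :: "'a mod_ring mat"
      where "Z = mat 2 1 (\<lambda>(i,j). if i = 0 \<and> j = 0 then N $$ (a,a) / N $$ (a,b) else 0)"
    have M: "mat 1 2 (\<lambda>(i,j). ?N $$ (2 + i, j)) \<in> carrier_mat 1 2" by simp
    have "cgl_shiftable (2 + 1) ?N"
    proof (rule cgl_shiftable_split[OF N' _ cgl_shiftable_2x2_F3[OF p], of Z])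
      let ?R = "mat 1 1 (\<lambda>(i,j). ?N $$ (2 + i, 2 + j)) - mat 1 2 (\<lambda>(i,j). ?N $$ (2 + i, j)) * Z"
      have "?R $$ (0,0) = N $$ (a,a) - N $$ (a,b) * (N $$ (a,a) / N $$ (a,b))"
        unfolding Z_def using mult_single_entry_mat[OF M, of 0 0 0 1 0] L by (simp add: numeral_2_eq_2)
      hence "?R $$ (0,0) = 0" using off_diag by simp
      thus "cgl_shiftable 1 ?R" using two by (intro cgl_shiftable_1I[of 1]) (auto simp: Z_def)
    qed (auto simp: Z_def)
    hence "cgl_shiftable 3 ?N" by (simp add: numeral_3_eq_3)
    thus ?thesis by (rule cgl_shiftable_permute[OF N L(1-3)])
  next
    case neg_one
    thus ?thesis by (rule cgl_shiftable_neg_one_3x3_F3[OF p])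
  qed
qed

lemma cgl_shiftable_F3:
  fixes N :: "'a::prime_card mod_ring mat"
  assumes p: "CARD('a) = 3" and N: "N \<in> carrier_mat n n" and n: "2 \<le> n"
  shows "cgl_shiftable n N"
  using N n
proof (induction n arbitrary: N rule: less_induct)
  case (less n)
  consider "n = 2" | "n = 3" | "4 \<le> n" using less.prems by linarith
  thus ?case
  proof cases
    case 3
    have N: "N \<in> carrier_mat (2 + (n - 2)) (2 + (n - 2))" using less.prems 3 by auto
    have "cgl_shiftable (2 + (n - 2)) N"
      by (rule cgl_shiftable_split_Z0[OF N cgl_shiftable_2x2_F3[OF p] less.IH]) (use 3 in auto)
    moreover have "2 + (n - 2) = n" using 3 by simp
    ultimately show ?thesis by metis
  qed (use less.prems cgl_shiftable_2x2_F3[OF p] cgl_shiftable_3x3_F3[OF p] in auto)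
qed

section \<open>Shiftability over \<open>\<bbbF>\<^sub>2\<close>\<close>

lemma cgl_shiftable_3x3_F2:
  fixes N :: "'a::prime_card mod_ring mat"
  assumes p: "CARD('a) = 2" and N: "N \<in> carrier_mat 3 3"
  shows "cgl_shiftable 3 N"
proof -
  let ?Es = "{mat3 0 0 1 0 1 1 1 1 0, mat3 0 1 0 1 0 1 1 0 0, mat3 0 1 1 1 1 1 0 1 0, mat3 1 0 1 1 0 0 0 1 1,
    mat3 0 0 1 1 0 0 0 1 1, mat3 0 1 0 1 1 1 1 1 0, mat3 0 1 0 0 0 1 1 1 0, mat3 1 0 1 1 1 0 1 1 1,
    mat3 0 0 1 0 1 1 1 1 1, mat3 0 0 1 1 0 0 1 1 0} :: 'a mod_ring mat set"
  note F2 = numeral_mod_ring_eq_0_iff[where 'a='a, unfolded p]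
  have "?Es \<subseteq> CGL 3" unfolding CGL_eq_det by (simp add: det_mat3 mat3_one mat3_plus F2)
  moreover obtain a b c d e f g h i where N_eq: "N = mat3 a b c d e f g h i" using mat3_cases[OF N] by blast
  have "\<exists>E \<in> ?Es. det (E + N) \<noteq> 0"
    unfolding N_eq using mod_ring_cases_2[OF p, of a] mod_ring_cases_2[OF p, of b]
      mod_ring_cases_2[OF p, of c] mod_ring_cases_2[OF p, of d] mod_ring_cases_2[OF p, of e]
      mod_ring_cases_2[OF p, of f] mod_ring_cases_2[OF p, of g] mod_ring_cases_2[OF p, of h]
      mod_ring_cases_2[OF p, of i]
    by (elim disjE) (simp_all add: det_mat3 mat3_plus F2)
  ultimately show ?thesis unfolding cgl_shiftable_def by blast
qed

text \<open>Over \<open>\<bbbF>\<^sub>2\<close> this characterises shiftability of the principal \<open>2 \<times> 2\<close> submatrix on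
  the indices \<open>i, j\<close>; only the sufficiency is needed.\<close>
definition shiftable_pair :: "'a::zero mat \<Rightarrow> nat \<Rightarrow> nat \<Rightarrow> bool" where
  "shiftable_pair N i j \<longleftrightarrow> N $$ (i,i) \<noteq> N $$ (j,j) \<or> (N $$ (i,j) = 0 \<and> N $$ (j,i) = 0)"

lemma cgl_shiftable_2x2_F2:
  fixes N :: "'a::prime_card mod_ring mat"
  assumes p: "CARD('a) = 2" and N: "N \<in> carrier_mat 2 2" and pair: "shiftable_pair N 0 1"
  shows "cgl_shiftable 2 N"
proof -
  let ?Es = "{mat2 0 1 1 1, mat2 1 1 1 0} :: 'a mod_ring mat set"
  note F2 = numeral_mod_ring_eq_0_iff[where 'a='a, unfolded p]
  have "?Es \<subseteq> CGL 2" unfolding CGL_eq_det by (simp add: det_mat2 mat2_one mat2_plus F2)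
  moreover obtain a b c d where N_eq: "N = mat2 a b c d" using mat2_cases[OF N] by blast
  have "\<exists>E \<in> ?Es. det (E + N) \<noteq> 0"
    using pair unfolding N_eq shiftable_pair_def
    using mod_ring_cases_2[OF p, of a] mod_ring_cases_2[OF p, of b]
      mod_ring_cases_2[OF p, of c] mod_ring_cases_2[OF p, of d]
    by (elim disjE) (simp_all add: det_mat2 mat2_plus F2)
  ultimately show ?thesis unfolding cgl_shiftable_def by blast
qed

text \<open>A nonzero entry \<open>N\<^bsub>k+r,c\<^esub>\<close> below the first block is used through a Schur complement
  with \<open>Z = e\<^sub>c e\<^sub>r\<^sup>T\<close>, which flips the diagonal entry \<open>r\<close> of the lower block.\<close>
lemma cgl_shiftable_extend_2_F2:
  fixes N :: "'a::prime_card mod_ring mat"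
  assumes p: "CARD('a) = 2" and N: "N \<in> carrier_mat (k + 2) (k + 2)"
    and top: "cgl_shiftable k (mat k k (\<lambda>(i,j). N $$ (i,j)))"
    and bottom: "shiftable_pair N k (k + 1) \<or> (\<exists>r<2. \<exists>c<k. N $$ (k + r, c) \<noteq> 0)"
  shows "cgl_shiftable (k + 2) N"
proof (cases "shiftable_pair N k (k + 1)")
  case True
  show ?thesis
    by (rule cgl_shiftable_split_Z0[OF N top], rule cgl_shiftable_2x2_F2[OF p])
      (use True in \<open>auto simp: shiftable_pair_def\<close>)
next
  case False
  with bottom obtain r c where r: "r < 2" and c: "c < k" and nz: "N $$ (k + r, c) \<noteq> 0" by auto
  from False have eq: "N $$ (k,k) = N $$ (k + 1, k + 1)" unfolding shiftable_pair_def by auto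
  from nz mod_ring_cases_2[OF p] have one: "N $$ (k + r, c) = 1" by blast
  have two: "(1 :: 'a mod_ring) + 1 = 0"
    using numeral_mod_ring_eq_0_iff[where 'a='a and k="num.Bit0 num.One"] p by simp
  define Z :: "'a mod_ring mat" where "Z = mat k 2 (\<lambda>(i,j). if i = c \<and> j = r then 1 else 0)"
  have M: "mat 2 k (\<lambda>(i,j). N $$ (k + i, j)) \<in> carrier_mat 2 k" by simp
  show ?thesis
  proof (rule cgl_shiftable_split[OF N _ top, of Z])
    let ?R = "mat 2 2 (\<lambda>(i,j). N $$ (k + i, k + j)) - mat 2 k (\<lambda>(i,j). N $$ (k + i, j)) * Z"
    have R00: "?R $$ (0,0) = N $$ (k,k) - (if r = 0 then N $$ (k, c) else 0)"
      unfolding Z_def using mult_single_entry_mat[OF M c, of 0 0 2 r 1] c by auto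
    have R11: "?R $$ (1,1) = N $$ (k + 1, k + 1) - (if r = 1 then N $$ (k + 1, c) else 0)"
      unfolding Z_def using mult_single_entry_mat[OF M c, of 1 1 2 r 1] c by auto
    have "r = 0 \<or> r = 1" using r by linarith
    hence "?R $$ (0,0) \<noteq> ?R $$ (1,1)"
      using one eq two unfolding R00 R11 by (elim disjE) (auto simp: algebra_simps)
    thus "cgl_shiftable 2 ?R" by (intro cgl_shiftable_2x2_F2[OF p]) (auto simp: Z_def shiftable_pair_def)
  qed (simp add: Z_def)
qed

lemma cgl_shiftable_4x4_F2_pairs:
  fixes N :: "'a::prime_card mod_ring mat"
  assumes p: "CARD('a) = 2" and N: "N \<in> carrier_mat 4 4"
    and L: "distinct [a, b, c, d]" "a < 4" "b < 4" "c < 4" "d < 4"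
    and ab: "shiftable_pair N a b"
    and cd: "shiftable_pair N c d \<or> N $$ (c,a) \<noteq> 0 \<or> N $$ (c,b) \<noteq> 0 \<or> N $$ (d,a) \<noteq> 0 \<or> N $$ (d,b) \<noteq> 0"
  shows "cgl_shiftable 4 N"
proof (rule cgl_shiftable_permute[OF N L(1)])
  show "length [a, b, c, d] = 4" "set [a, b, c, d] \<subseteq> {..<4}" using L by auto
  let ?N = "mat 4 4 (\<lambda>(i,j). N $$ ([a, b, c, d] ! i, [a, b, c, d] ! j)) :: 'a mod_ring mat"
  have N': "?N \<in> carrier_mat (2 + 2) (2 + 2)" by simp
  have "cgl_shiftable (2 + 2) ?N"
  proof (rule cgl_shiftable_extend_2_F2[OF p N'])
    show "cgl_shiftable 2 (mat 2 2 (\<lambda>(i,j). ?N $$ (i,j)))"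
      by (rule cgl_shiftable_2x2_F2[OF p]) (use ab in \<open>auto simp: shiftable_pair_def\<close>)
    have "\<exists>r<2. \<exists>c'<2. ?N $$ (2 + r, c') \<noteq> 0"
      if "N $$ (c,a) \<noteq> 0 \<or> N $$ (c,b) \<noteq> 0 \<or> N $$ (d,a) \<noteq> 0 \<or> N $$ (d,b) \<noteq> 0"
    proof -
      have "?N $$ (2 + 0, 0) \<noteq> 0 \<or> ?N $$ (2 + 0, 1) \<noteq> 0 \<or> ?N $$ (2 + 1, 0) \<noteq> 0 \<or> ?N $$ (2 + 1, 1) \<noteq> 0"
        using that by simp
      moreover have "(0::nat) < 2" "(1::nat) < 2" by simp_all
      ultimately show ?thesis by blast
    qed
    thus "shiftable_pair ?N 2 (2 + 1) \<or> (\<exists>r<2. \<exists>c'<2. ?N $$ (2 + r, c') \<noteq> 0)"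
      using cd by (auto simp: shiftable_pair_def)
  qed
  thus "cgl_shiftable 4 ?N" by simp
qed

lemma cgl_shiftable_4x4_F2_three_one:
  fixes N :: "'a::prime_card mod_ring mat"
  assumes p: "CARD('a) = 2" and N: "N \<in> carrier_mat 4 4"
    and L: "distinct [a, b, c, m]" "a < 4" "b < 4" "c < 4" "m < 4"
    and diag: "N $$ (a,a) = N $$ (b,b)" "N $$ (a,a) = N $$ (c,c)" "N $$ (a,a) \<noteq> N $$ (m,m)"
  shows "cgl_shiftable 4 N"
proof -
  consider "shiftable_pair N b c \<or> N $$ (b,a) \<noteq> 0 \<or> N $$ (b,m) \<noteq> 0 \<or> N $$ (c,a) \<noteq> 0 \<or> N $$ (c,m) \<noteq> 0"
    | "shiftable_pair N a c \<or> N $$ (a,b) \<noteq> 0 \<or> N $$ (a,m) \<noteq> 0 \<or> N $$ (c,b) \<noteq> 0 \<or> N $$ (c,m) \<noteq> 0"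
    | "shiftable_pair N a b \<or> N $$ (a,c) \<noteq> 0 \<or> N $$ (a,m) \<noteq> 0 \<or> N $$ (b,c) \<noteq> 0 \<or> N $$ (b,m) \<noteq> 0"
    unfolding shiftable_pair_def by blast
  thus ?thesis
  proof cases
    case 1
    show ?thesis
      by (rule cgl_shiftable_4x4_F2_pairs[OF p N, of a m b c]) (use L diag 1 in \<open>auto simp: shiftable_pair_def\<close>)
  next
    case 2
    show ?thesis
      by (rule cgl_shiftable_4x4_F2_pairs[OF p N, of b m a c]) (use L diag 2 in \<open>auto simp: shiftable_pair_def\<close>)
  next
    case 3
    show ?thesis
      by (rule cgl_shiftable_4x4_F2_pairs[OF p N, of c m a b]) (use L diag 3 in \<open>auto simp: shiftable_pair_def\<close>)
  qed
qed

text \<open>With constant diagonal, either all pairs are shiftable or a transvection conjugate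
  (\<open>add_col_sub_row\<close>) changes exactly two diagonal entries.\<close>
lemma cgl_shiftable_4x4_F2_const_diag:
  fixes N :: "'a::prime_card mod_ring mat"
  assumes p: "CARD('a) = 2" and N: "N \<in> carrier_mat 4 4"
    and diag: "\<And>a. a < 4 \<Longrightarrow> N $$ (a,a) = N $$ (0,0)"
  shows "cgl_shiftable 4 N"
proof (cases "\<forall>i<4. \<forall>j<4. i \<noteq> j \<longrightarrow> N $$ (j,i) = 0")
  case True
  show ?thesis
    by (rule cgl_shiftable_4x4_F2_pairs[OF p N, of 0 1 2 3]) (use True in \<open>auto simp: shiftable_pair_def\<close>)
next
  case False
  then obtain i j where ij: "i < 4" "j < 4" "i \<noteq> j" and nz: "N $$ (j,i) \<noteq> 0" by auto
  from nz mod_ring_cases_2[OF p] have one: "N $$ (j,i) = 1" by blast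
  obtain k l where kl: "distinct [i, j, k, l]" "k < 4" "l < 4"
  proof -
    define k where "k = (if 0 \<notin> {i,j} then 0 else if 1 \<notin> {i,j} then 1 else (2::nat))"
    define l where "l = (if 3 \<notin> {i,j} then 3 else if 2 \<notin> {i,j} then 2 else (1::nat))"
    have "distinct [i, j, k, l] \<and> k < 4 \<and> l < 4" using ij unfolding k_def l_def by auto
    thus ?thesis using that by blast
  qed
  let ?B = "add_col_sub_row 1 i j N"
  have B: "?B \<in> carrier_mat 4 4" using N by simp
  have "cgl_shiftable 4 ?B"
  proof (rule cgl_shiftable_4x4_F2_pairs[OF p B, of i k j l])
    show "shiftable_pair ?B i k" using N ij kl diag[of i] diag[of k] one by (auto simp: shiftable_pair_def)
    have "shiftable_pair ?B j l" using N ij kl diag[of j] diag[of l] one by (auto simp: shiftable_pair_def)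
    thus "shiftable_pair ?B j l \<or> ?B $$ (j,i) \<noteq> 0 \<or> ?B $$ (j,k) \<noteq> 0 \<or> ?B $$ (l,i) \<noteq> 0 \<or> ?B $$ (l,k) \<noteq> 0"
      by blast
  qed (use ij kl in auto)
  thus ?thesis
    using cgl_shiftable_similar[OF similar_mat_sym[OF add_col_sub_row_similar[OF N ij]] N] by blast
qed

lemma cgl_shiftable_4x4_F2:
  fixes N :: "'a::prime_card mod_ring mat"
  assumes p: "CARD('a) = 2" and N: "N \<in> carrier_mat 4 4"
  shows "cgl_shiftable 4 N"
proof -
  have two_two: "cgl_shiftable 4 N"
    if "distinct [a, b, c, d]" "a < 4" "b < 4" "c < 4" "d < 4" "N $$ (a,a) \<noteq> N $$ (b,b)" "N $$ (c,c) \<noteq> N $$ (d,d)"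
    for a b c d
    by (rule cgl_shiftable_4x4_F2_pairs[OF p N, of a b c d]) (use that in \<open>auto simp: shiftable_pair_def\<close>)
  note three_one = cgl_shiftable_4x4_F2_three_one[OF p N]
  note const = cgl_shiftable_4x4_F2_const_diag[OF p N]
  \<comment> \<open>the diagonal is constant, has one entry differing from the other three, or splits
    into two pairs of unequal entries\<close>
  show ?thesis
    using mod_ring_cases_2[OF p, of "N $$ (0,0)"] mod_ring_cases_2[OF p, of "N $$ (1,1)"]
      mod_ring_cases_2[OF p, of "N $$ (2,2)"] mod_ring_cases_2[OF p, of "N $$ (3,3)"]
    apply (elim disjE)
                   apply (rule const; auto simp: less_Suc_eq numeral_eq_Suc)
                  apply (rule three_one[of 0 1 2 3]; simp)
                 apply (rule three_one[of 0 1 3 2]; simp)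
                apply (rule two_two[of 0 2 1 3]; simp)
               apply (rule three_one[of 0 2 3 1]; simp)
              apply (rule two_two[of 0 1 2 3]; simp)
             apply (rule two_two[of 0 1 3 2]; simp)
            apply (rule three_one[of 1 2 3 0]; simp)
           apply (rule three_one[of 1 2 3 0]; simp)
          apply (rule two_two[of 1 0 2 3]; simp)
         apply (rule two_two[of 1 0 3 2]; simp)
        apply (rule three_one[of 0 2 3 1]; simp)
       apply (rule two_two[of 2 0 3 1]; simp)
      apply (rule three_one[of 0 1 3 2]; simp)
     apply (rule three_one[of 0 1 2 3]; simp)
    apply (rule const; auto simp: less_Suc_eq numeral_eq_Suc)
    done
qed

lemma cgl_shiftable_5x5_F2_last_pair:
  fixes N :: "'a::prime_card mod_ring mat"
  assumes p: "CARD('a) = 2" and N: "N \<in> carrier_mat 5 5"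
    and L: "distinct L" "length L = 5" "set L \<subseteq> {..<5}"
    and last: "shiftable_pair N (L ! 3) (L ! 4) \<or> N $$ (L ! 4, L ! 0) \<noteq> 0"
  shows "cgl_shiftable 5 N"
proof (rule cgl_shiftable_permute[OF N L])
  let ?N = "mat 5 5 (\<lambda>(i,j). N $$ (L ! i, L ! j)) :: 'a mod_ring mat"
  have N': "?N \<in> carrier_mat (3 + 2) (3 + 2)" by simp
  have "cgl_shiftable (3 + 2) ?N"
  proof (rule cgl_shiftable_extend_2_F2[OF p N' cgl_shiftable_3x3_F2[OF p]])
    have "?N $$ (3 + 1, 0) \<noteq> 0" if "N $$ (L ! 4, L ! 0) \<noteq> 0" using that by simp
    moreover have "(1::nat) < 2" "(0::nat) < 3" by simp_all
    ultimately show "shiftable_pair ?N 3 (3 + 1) \<or> (\<exists>r<2. \<exists>c<3. ?N $$ (3 + r, c) \<noteq> 0)"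
      using last unfolding shiftable_pair_def by fastforce
  qed simp
  thus "cgl_shiftable 5 ?N" by simp
qed

lemma cgl_shiftable_5x5_F2:
  fixes N :: "'a::prime_card mod_ring mat"
  assumes p: "CARD('a) = 2" and N: "N \<in> carrier_mat 5 5"
  shows "cgl_shiftable 5 N"
proof -
  have less5: "a = 0 \<or> a = 1 \<or> a = 2 \<or> a = 3 \<or> a = 4" if "a < 5" for a :: nat using that by auto
  note last_pair = cgl_shiftable_5x5_F2_last_pair[OF p N]
  consider (diag) a b where "a < 5" "b < 5" "N $$ (a,a) \<noteq> N $$ (b,b)"
    | (off_diag) a b where "a < 5" "b < 5" "a \<noteq> b" "N $$ (a,b) \<noteq> 0"
    | (scalar) "\<And>a b. a < 5 \<Longrightarrow> b < 5 \<Longrightarrow> a \<noteq> b \<Longrightarrow> N $$ (a,b) = 0"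
    by blast
  thus ?thesis
  proof cases
    case (diag a b)
    hence "a \<noteq> b" by auto
    with diag show ?thesis
      by (intro last_pair[of "filter (\<lambda>x. x \<noteq> a \<and> x \<noteq> b) [0..<5] @ [a, b]"];
          insert less5[OF diag(1)] less5[OF diag(2)]; elim disjE; simp add: upt_rec shiftable_pair_def)
  next
    case (off_diag a b)
    thus ?thesis
      by (intro last_pair[of "b # filter (\<lambda>x. x \<noteq> a \<and> x \<noteq> b) [0..<5] @ [a]"];
          insert less5[OF off_diag(1)] less5[OF off_diag(2)]; elim disjE; simp add: upt_rec)
  next
    case scalar
    show ?thesis by (rule last_pair[of "[0, 1, 2, 3, 4]"]) (auto simp: shiftable_pair_def scalar)
  qed
qed

lemma cgl_shiftable_F2:
  fixes N :: "'a::prime_card mod_ring mat"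
  assumes p: "CARD('a) = 2" and N: "N \<in> carrier_mat n n" and n: "3 \<le> n"
  shows "cgl_shiftable n N"
  using N n
proof (induction n arbitrary: N rule: less_induct)
  case (less n)
  consider "n = 3" | "n = 4" | "n = 5" | "6 \<le> n" using less.prems by linarith
  thus ?case
  proof cases
    case 4
    have N: "N \<in> carrier_mat (3 + (n - 3)) (3 + (n - 3))" using less.prems 4 by auto
    have "cgl_shiftable (3 + (n - 3)) N"
      by (rule cgl_shiftable_split_Z0[OF N cgl_shiftable_3x3_F2[OF p] less.IH]) (use 4 in auto)
    moreover have "3 + (n - 3) = n" using 4 by simp
    ultimately show ?thesis by metis
  qed (use less.prems cgl_shiftable_3x3_F2[OF p] cgl_shiftable_4x4_F2[OF p] cgl_shiftable_5x5_F2[OF p] in auto)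
qed

lemma cgl_shiftable_mod_ring:
  fixes M :: "'a::prime_card mod_ring mat"
  assumes d: "1 \<le> d" and nonexc: "(d, CARD('a)) \<notin> {(1,2), (1,3), (2,2)}" and M: "M \<in> carrier_mat d d"
  shows "cgl_shiftable d M"
proof -
  consider "CARD('a) = 2" | "CARD('a) = 3" | "CARD('a) \<noteq> 2 \<and> CARD('a) \<noteq> 3" by blast
  thus ?thesis
  proof cases
    case 1
    with d nonexc have "3 \<le> d" by auto
    with 1 M show ?thesis by (rule cgl_shiftable_F2)
  next
    case 2
    with d nonexc have "2 \<le> d" by auto
    with 2 M show ?thesis by (rule cgl_shiftable_F3)
  next
    case 3
    have "prime CARD('a)" by (rule prime_card)
    hence "CARD('a) \<noteq> 4" using prime_product[of "2::nat" 2] by auto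
    with 3 prime_ge_2_nat[OF \<open>prime CARD('a)\<close>] have "3 < CARD('a)" by linarith
    hence "(2 :: 'a mod_ring) \<noteq> 0" "(3 :: 'a mod_ring) \<noteq> 0"
      unfolding numeral_mod_ring_eq_0_iff by (auto dest: dvd_imp_le)
    with M show ?thesis using cgl_shiftable_two_three_nonzero by blast
  qed
qed

section \<open>Cycle types\<close>

lemma funpow_mult_fixpoint: "(\<sigma> ^^ k) x = x \<Longrightarrow> (\<sigma> ^^ (k * m)) x = x"
  by (induction m) (simp_all add: funpow_add)

lemma cyc_orbit_periodic:
  assumes "(\<sigma> ^^ k) x = x" "0 < k"
  shows "cyc_orbit \<sigma> x = (\<lambda>i. (\<sigma> ^^ i) x) ` {..<k}"
proof (intro equalityI subsetI)
  fix y assume "y \<in> cyc_orbit \<sigma> x"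
  then obtain n where y: "y = (\<sigma> ^^ n) x" unfolding cyc_orbit_def by auto
  have "(\<sigma> ^^ n) x = (\<sigma> ^^ (n mod k)) ((\<sigma> ^^ (k * (n div k))) x)"
    by (metis funpow_add o_apply mod_div_mult_eq mult.commute)
  also have "\<dots> = (\<sigma> ^^ (n mod k)) x" using funpow_mult_fixpoint[OF assms(1)] by simp
  finally show "y \<in> (\<lambda>i. (\<sigma> ^^ i) x) ` {..<k}" using y assms(2) by auto
qed (auto simp: cyc_orbit_def)

lemma cyc_orbit_funpow_subset: "cyc_orbit \<sigma> ((\<sigma> ^^ m) z) \<subseteq> cyc_orbit \<sigma> z"
proof
  fix w assume "w \<in> cyc_orbit \<sigma> ((\<sigma> ^^ m) z)"
  then obtain i where "w = (\<sigma> ^^ i) ((\<sigma> ^^ m) z)" unfolding cyc_orbit_def by auto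
  hence "w = (\<sigma> ^^ (i + m)) z" by (simp add: funpow_add)
  thus "w \<in> cyc_orbit \<sigma> z" unfolding cyc_orbit_def by auto
qed

lemma cyc_orbit_eq_if_mem:
  assumes period: "(\<sigma> ^^ k) x = x" "0 < k" and y: "y \<in> cyc_orbit \<sigma> x"
  shows "cyc_orbit \<sigma> y = cyc_orbit \<sigma> x"
proof -
  from y obtain n where n: "y = (\<sigma> ^^ n) x" unfolding cyc_orbit_def by auto
  have "n \<le> k * n" using period(2) by simp
  hence "(\<sigma> ^^ (k * n - n)) y = (\<sigma> ^^ (k * n)) x"
    unfolding n by (simp flip: funpow_add[THEN fun_cong, unfolded comp_apply])
  hence x: "x = (\<sigma> ^^ (k * n - n)) y" using funpow_mult_fixpoint[OF period(1)] by simp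
  show ?thesis
    using cyc_orbit_funpow_subset[of \<sigma> n x] cyc_orbit_funpow_subset[of \<sigma> "k * n - n" y]
    unfolding n[symmetric] x[symmetric] by blast
qed

lemma cycle_type_eq_card_orbits: "cycle_type \<Omega> \<sigma> j = card {C \<in> cyc_orbit \<sigma> ` \<Omega>. card C = j}"
  unfolding cycle_type_def by (rule arg_cong[of _ _ card]) auto

lemma cycle_type_fixed_points_and_k_cycles:
  assumes fin: "finite \<Omega>" and maps: "\<And>x. x \<in> \<Omega> \<Longrightarrow> \<sigma> x \<in> \<Omega>"
    and period: "\<And>x. x \<in> \<Omega> \<Longrightarrow> (\<sigma> ^^ k) x = x" and k: "1 < k"
    and orbit_size: "\<And>x. x \<in> \<Omega> \<Longrightarrow> \<sigma> x \<noteq> x \<Longrightarrow> card (cyc_orbit \<sigma> x) = k"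
  shows "cycle_type \<Omega> \<sigma> =
    (\<lambda>j. if j = 1 then card {x \<in> \<Omega>. \<sigma> x = x} else if j = k then card {x \<in> \<Omega>. \<sigma> x \<noteq> x} div k else 0)"
proof
  fix j
  have k0: "0 < k" using k by simp
  define F where "F = {x \<in> \<Omega>. \<sigma> x = x}"
  define R where "R = {x \<in> \<Omega>. \<sigma> x \<noteq> x}"
  have orbit_fixed: "cyc_orbit \<sigma> x = {x}" if "x \<in> F" for x
    using cyc_orbit_periodic[where k = 1 and x = x] that unfolding F_def by auto
  have orbit_in: "cyc_orbit \<sigma> x \<subseteq> \<Omega>" if "x \<in> \<Omega>" for x
  proof
    fix y assume "y \<in> cyc_orbit \<sigma> x"
    then obtain n where "y = (\<sigma> ^^ n) x" unfolding cyc_orbit_def by auto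
    thus "y \<in> \<Omega>" using that maps by (induction n arbitrary: y) auto
  qed
  have orbit_R: "cyc_orbit \<sigma> x \<subseteq> R" if "x \<in> R" for x
  proof
    fix y assume y: "y \<in> cyc_orbit \<sigma> x"
    have "x \<in> \<Omega>" using that unfolding R_def by auto
    hence eq: "cyc_orbit \<sigma> y = cyc_orbit \<sigma> x" using cyc_orbit_eq_if_mem[OF period k0 y] by auto
    have "y \<notin> F" using orbit_fixed[of y] orbit_size[of x] that k eq unfolding R_def by auto
    thus "y \<in> R" using orbit_in[OF \<open>x \<in> \<Omega>\<close>] y unfolding F_def R_def by auto
  qed
  have orbits: "cyc_orbit \<sigma> ` \<Omega> = (\<lambda>x. {x}) ` F \<union> cyc_orbit \<sigma> ` R"
    using orbit_fixed unfolding F_def R_def by auto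
  have ones: "{C \<in> cyc_orbit \<sigma> ` \<Omega>. card C = 1} = (\<lambda>x. {x}) ` F"
    using orbit_size k unfolding orbits R_def by auto
  have ks: "{C \<in> cyc_orbit \<sigma> ` \<Omega>. card C = k} = cyc_orbit \<sigma> ` R"
    using orbit_size k unfolding orbits R_def by auto
  have others: "{C \<in> cyc_orbit \<sigma> ` \<Omega>. card C = j} = {}" if "j \<noteq> 1" "j \<noteq> k"
    using orbit_size that unfolding orbits R_def by auto
  have "k * card (cyc_orbit \<sigma> ` R) = card (\<Union> (cyc_orbit \<sigma> ` R))"
  proof (rule card_partition)
    show "finite (cyc_orbit \<sigma> ` R)" "finite (\<Union> (cyc_orbit \<sigma> ` R))"
      using fin orbit_in unfolding R_def by (auto intro: finite_subset)
    show "card C = k" if "C \<in> cyc_orbit \<sigma> ` R" for C using that orbit_size unfolding R_def by auto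
    show "C1 \<inter> C2 = {}" if C: "C1 \<in> cyc_orbit \<sigma> ` R" "C2 \<in> cyc_orbit \<sigma> ` R" "C1 \<noteq> C2" for C1 C2
    proof (rule ccontr)
      assume "C1 \<inter> C2 \<noteq> {}"
      then obtain z where "z \<in> C1" "z \<in> C2" by blast
      moreover obtain x1 x2 where "x1 \<in> \<Omega>" "C1 = cyc_orbit \<sigma> x1" "x2 \<in> \<Omega>" "C2 = cyc_orbit \<sigma> x2"
        using C(1,2) unfolding R_def by blast
      ultimately show False
        using cyc_orbit_eq_if_mem[OF period k0] C(3) by metis
    qed
  qed
  moreover have "\<Union> (cyc_orbit \<sigma> ` R) = R"
  proof -
    have "x \<in> cyc_orbit \<sigma> x" for x unfolding cyc_orbit_def by (metis (mono_tags) CollectI funpow_0)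
    thus ?thesis using orbit_R by blast
  qed
  ultimately have "card (cyc_orbit \<sigma> ` R) = card R div k" using k0 by (metis nonzero_mult_div_cancel_left neq0_conv)
  moreover have "card ((\<lambda>x. {x}) ` F) = card F" by (rule card_image) (auto simp: inj_on_def)
  ultimately have "cycle_type \<Omega> \<sigma> 1 = card F" "cycle_type \<Omega> \<sigma> k = card R div k"
    unfolding cycle_type_eq_card_orbits ones ks by simp_all
  moreover have "cycle_type \<Omega> \<sigma> j = 0" if "j \<noteq> 1" "j \<noteq> k"
    unfolding cycle_type_eq_card_orbits others[OF that] by simp
  ultimately show "cycle_type \<Omega> \<sigma> j = (if j = 1 then card F else if j = k then card R div k else 0)"
    using k by auto
qed

lemma cycle_type_order_3:
  assumes fin: "finite \<Omega>" and maps: "\<And>x. x \<in> \<Omega> \<Longrightarrow> \<sigma> x \<in> \<Omega>"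
    and order: "\<And>x. x \<in> \<Omega> \<Longrightarrow> \<sigma> (\<sigma> (\<sigma> x)) = x"
  shows "cycle_type \<Omega> \<sigma> =
    (\<lambda>j. if j = 1 then card {x \<in> \<Omega>. \<sigma> x = x} else if j = 3 then card {x \<in> \<Omega>. \<sigma> x \<noteq> x} div 3 else 0)"
proof (rule cycle_type_fixed_points_and_k_cycles[OF fin maps])
  show "(\<sigma> ^^ 3) x = x" if "x \<in> \<Omega>" for x using order[OF that] by (simp add: numeral_3_eq_3)
  show "card (cyc_orbit \<sigma> x) = 3" if "x \<in> \<Omega>" "\<sigma> x \<noteq> x" for x
  proof -
    have "cyc_orbit \<sigma> x = (\<lambda>i. (\<sigma> ^^ i) x) ` {..<3}"
      by (rule cyc_orbit_periodic) (use order[OF that(1)] in \<open>simp_all add: numeral_3_eq_3\<close>)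
    also have "\<dots> = {x, \<sigma> x, \<sigma> (\<sigma> x)}" by (auto simp: numeral_3_eq_3 lessThan_Suc)
    finally show ?thesis using that order[OF that(1)] by (metis card_3_iff)
  qed
qed simp_all

lemma cycle_type_involution:
  assumes fin: "finite \<Omega>" and maps: "\<And>x. x \<in> \<Omega> \<Longrightarrow> \<sigma> x \<in> \<Omega>"
    and order: "\<And>x. x \<in> \<Omega> \<Longrightarrow> \<sigma> (\<sigma> x) = x"
  shows "cycle_type \<Omega> \<sigma> =
    (\<lambda>j. if j = 1 then card {x \<in> \<Omega>. \<sigma> x = x} else if j = 2 then card {x \<in> \<Omega>. \<sigma> x \<noteq> x} div 2 else 0)"
proof (rule cycle_type_fixed_points_and_k_cycles[OF fin maps])
  show "(\<sigma> ^^ 2) x = x" if "x \<in> \<Omega>" for x using order[OF that] by (simp add: numeral_2_eq_2)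
  show "card (cyc_orbit \<sigma> x) = 2" if "x \<in> \<Omega>" "\<sigma> x \<noteq> x" for x
  proof -
    have "cyc_orbit \<sigma> x = (\<lambda>i. (\<sigma> ^^ i) x) ` {..<2}"
      by (rule cyc_orbit_periodic) (use order[OF that(1)] in \<open>simp_all add: numeral_2_eq_2\<close>)
    also have "\<dots> = {x, \<sigma> x}" by (auto simp: numeral_2_eq_2 lessThan_Suc)
    finally show ?thesis using that by simp
  qed
qed simp_all

section \<open>The exceptional cases\<close>

lemma aff_one_mat:
  assumes "x \<in> carrier_vec d" "v \<in> carrier_vec d"
  shows "aff d (1\<^sub>m d) v x = x + (v :: 'a::comm_ring_1 vec)"
proof (rule eq_vecI)
  fix j assume "j < dim_vec (x + v)"
  hence j: "j < d" using assms by simp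
  have "(\<Sum>i<d. x $ i * 1\<^sub>m d $$ (i, j)) = (\<Sum>i<d. x $ i * (if i = j then 1 else 0))"
    by (rule sum.cong) (use j in auto)
  also have "\<dots> = x $ j" by (rule sum_delta_mult(2)[OF j])
  finally show "aff d (1\<^sub>m d) v x $ j = (x + v) $ j" unfolding aff_def using j assms by simp
qed (use assms in \<open>auto simp: aff_def\<close>)

lemma aff_one_mat_fixed_iff:
  assumes x: "x \<in> carrier_vec d" and v: "v \<in> carrier_vec d"
  shows "aff d (1\<^sub>m d) v x = x \<longleftrightarrow> v = 0\<^sub>v d"
proof -
  have "x + v = x \<longleftrightarrow> v = 0\<^sub>v d"
  proof
    assume xv: "x + v = x"
    show "v = 0\<^sub>v d"
    proof (rule eq_vecI)
      fix i assume "i < dim_vec (0\<^sub>v d :: 'a vec)"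
      with arg_cong[OF xv, of "\<lambda>y. y $ i"] show "v $ i = 0\<^sub>v d $ i" using x v by simp
    qed (use v in simp)
  qed (use x in simp)
  thus ?thesis using aff_one_mat[OF x v] by simp
qed

lemma translation_cycle_type_F3:
  fixes v :: "'a::prime_card mod_ring vec"
  assumes p: "CARD('a) = 3" and v: "v \<in> carrier_vec 1"
  shows "cycle_type (carrier_vec 1) (aff 1 (1\<^sub>m 1) v) = (if v = 0\<^sub>v 1 then x1_3 else x3)"
proof -
  let ?\<sigma> = "aff 1 (1\<^sub>m 1) v"
  note F3 = numeral_mod_ring_eq_0_iff[where 'a='a, unfolded p]
  have \<sigma>: "?\<sigma> x = x + v" if "x \<in> carrier_vec 1" for x using aff_one_mat[OF that v] .
  have "?\<sigma> (?\<sigma> (?\<sigma> x)) = x" if x: "x \<in> carrier_vec 1" for x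
  proof -
    have "x + v + v + v = x"
    proof (rule eq_vecI)
      fix i assume "i < dim_vec x"
      moreover have "x $ i + v $ i + v $ i + v $ i = x $ i + 3 * v $ i" by (simp add: algebra_simps)
      ultimately show "(x + v + v + v) $ i = x $ i" using x v by (simp add: F3)
    qed (use x v in simp)
    moreover have "?\<sigma> (?\<sigma> (?\<sigma> x)) = x + v + v + v"
      using x v \<sigma>[of x] \<sigma>[of "x + v"] \<sigma>[of "x + v + v"] by simp
    ultimately show ?thesis by simp
  qed
  hence ct: "cycle_type (carrier_vec 1) ?\<sigma> = (\<lambda>j. if j = 1 then card {x \<in> carrier_vec 1. ?\<sigma> x = x}
      else if j = 3 then card {x \<in> carrier_vec 1. ?\<sigma> x \<noteq> x} div 3 else 0)"
    using v \<sigma> by (intro cycle_type_order_3) auto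
  have fixed_iff: "?\<sigma> x = x \<longleftrightarrow> v = 0\<^sub>v 1" if "x \<in> carrier_vec 1" for x
    using aff_one_mat_fixed_iff[OF that v] .
  show ?thesis
  proof (cases "v = 0\<^sub>v 1")
    case True
    hence "{x \<in> carrier_vec 1. ?\<sigma> x = x} = carrier_vec 1" "{x \<in> carrier_vec 1. ?\<sigma> x \<noteq> x} = {}"
      using fixed_iff by auto
    with True show ?thesis unfolding ct by (simp only:) (auto simp: card_carrier_vec p x1_3_def)
  next
    case False
    hence "{x \<in> carrier_vec 1. ?\<sigma> x = x} = {}" "{x \<in> carrier_vec 1. ?\<sigma> x \<noteq> x} = carrier_vec 1"
      using fixed_iff by auto
    with False show ?thesis unfolding ct by (simp only:) (auto simp: card_carrier_vec p x3_def)
  qed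
qed

lemma translation_cycle_type_F2:
  fixes v :: "'a::prime_card mod_ring vec"
  assumes p: "CARD('a) = 2" and v: "v \<in> carrier_vec 2"
  shows "cycle_type (carrier_vec 2) (aff 2 (1\<^sub>m 2) v) = (if v = 0\<^sub>v 2 then x1_4 else x2_2)"
proof -
  let ?\<sigma> = "aff 2 (1\<^sub>m 2) v"
  note F2 = numeral_mod_ring_eq_0_iff[where 'a='a, unfolded p]
  have \<sigma>: "?\<sigma> x = x + v" if "x \<in> carrier_vec 2" for x using aff_one_mat[OF that v] .
  have "?\<sigma> (?\<sigma> x) = x" if x: "x \<in> carrier_vec 2" for x
  proof -
    have "x + v + v = x"
    proof (rule eq_vecI)
      fix i assume "i < dim_vec x"
      moreover have "x $ i + v $ i + v $ i = x $ i + 2 * v $ i" by (simp add: algebra_simps)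
      ultimately show "(x + v + v) $ i = x $ i" using x v by (simp add: F2)
    qed (use x v in simp)
    moreover have "?\<sigma> (?\<sigma> x) = x + v + v" using x v \<sigma>[of x] \<sigma>[of "x + v"] by simp
    ultimately show ?thesis by simp
  qed
  hence ct: "cycle_type (carrier_vec 2) ?\<sigma> = (\<lambda>j. if j = 1 then card {x \<in> carrier_vec 2. ?\<sigma> x = x}
      else if j = 2 then card {x \<in> carrier_vec 2. ?\<sigma> x \<noteq> x} div 2 else 0)"
    using v \<sigma> by (intro cycle_type_involution) auto
  have fixed_iff: "?\<sigma> x = x \<longleftrightarrow> v = 0\<^sub>v 2" if "x \<in> carrier_vec 2" for x
    using aff_one_mat_fixed_iff[OF that v] .
  show ?thesis
  proof (cases "v = 0\<^sub>v 2")
    case True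
    hence "{x \<in> carrier_vec 2. ?\<sigma> x = x} = carrier_vec 2" "{x \<in> carrier_vec 2. ?\<sigma> x \<noteq> x} = {}"
      using fixed_iff by auto
    with True show ?thesis unfolding ct by (simp only:) (auto simp: card_carrier_vec p x1_4_def)
  next
    case False
    hence "{x \<in> carrier_vec 2. ?\<sigma> x = x} = {}" "{x \<in> carrier_vec 2. ?\<sigma> x \<noteq> x} = carrier_vec 2"
      using fixed_iff by auto
    with False show ?thesis unfolding ct by (simp only:) (auto simp: card_carrier_vec p x2_2_def)
  qed
qed

definition vec2 :: "'a \<Rightarrow> 'a \<Rightarrow> 'a vec" where
  "vec2 a b = vec 2 (\<lambda>i. if i = 0 then a else b)"

lemma vec2_carrier [simp]: "vec2 a b \<in> carrier_vec 2"
  unfolding vec2_def by simp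

lemma vec2_index [simp]: "vec2 a b $ 0 = a" "vec2 a b $ 1 = b" "vec2 a b $ Suc 0 = b"
  unfolding vec2_def by simp_all

lemma vec2_eq_iff [simp]: "vec2 a b = vec2 c d \<longleftrightarrow> a = c \<and> b = d"
  by (metis vec2_index(1,2))

lemma vec2_cases: "x \<in> carrier_vec 2 \<Longrightarrow> x = vec2 (x $ 0) (x $ 1)"
  unfolding vec2_def by (rule eq_vecI) (auto simp: less_2_cases_iff)

lemma carrier_vec_2_F2:
  assumes "CARD('a::prime_card) = 2"
  shows "(carrier_vec 2 :: 'a mod_ring vec set) = {vec2 0 0, vec2 0 1, vec2 1 0, vec2 1 1}"
proof (intro equalityI subsetI)
  fix x :: "'a mod_ring vec" assume "x \<in> carrier_vec 2"
  then obtain a b where "x = vec2 a b" using vec2_cases by blast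
  thus "x \<in> {vec2 0 0, vec2 0 1, vec2 1 0, vec2 1 1}"
    using mod_ring_cases_2[OF assms, of a] mod_ring_cases_2[OF assms, of b] by auto
qed auto

lemma aff_mat2_vec2:
  "aff 2 (mat2 m00 m01 m10 m11) (vec2 p q) (vec2 a b) = vec2 (a * m00 + b * m10 + p) (a * m01 + b * m11 + q)"
proof (rule eq_vecI)
  fix i assume "i < dim_vec (vec2 (a * m00 + b * m10 + p) (a * m01 + b * m11 + q))"
  hence "i = 0 \<or> i = 1" by (auto simp: vec2_def)
  thus "aff 2 (mat2 m00 m01 m10 m11) (vec2 p q) (vec2 a b) $ i = vec2 (a * m00 + b * m10 + p) (a * m01 + b * m11 + q) $ i"
    by (auto simp: aff_def numeral_2_eq_2 lessThan_Suc)
qed (simp add: aff_def vec2_def)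

lemma aff_carrier [simp]: "aff d M v x \<in> carrier_vec d"
  unfolding aff_def by simp

lemma numeral_mod_ring_2:
  assumes "CARD('a::prime_card) = 2"
  shows "(numeral k :: 'a mod_ring) = (if even (numeral k :: nat) then 0 else 1)"
proof -
  have "(numeral k :: 'a mod_ring) = of_nat (numeral k)" by simp
  also have "\<dots> = of_nat (numeral k mod CHAR('a mod_ring))" by (rule of_nat_mod_CHAR[symmetric])
  also have "\<dots> = of_nat (numeral k mod 2)" using assms by simp
  finally have k: "(numeral k :: 'a mod_ring) = of_nat (numeral k mod 2)" .
  show ?thesis unfolding k mod_2_eq_odd by simp
qed

lemma cycle_type_aff_CGL_2_F2:
  fixes v :: "'a::prime_card mod_ring vec"
  assumes p: "CARD('a) = 2" and M: "M \<in> {mat2 0 1 1 1, mat2 1 1 1 0}" and v: "v \<in> carrier_vec 2"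
  shows "cycle_type (carrier_vec 2) (aff 2 M v) = x1x3"
proof -
  let ?\<sigma> = "aff 2 M v"
  note F2 = numeral_mod_ring_2[OF p]
  note \<Omega> = carrier_vec_2_F2[OF p]
  obtain a b where v_eq: "v = vec2 a b" using vec2_cases[OF v] by blast
  note cases = M mod_ring_cases_2[OF p, of a] mod_ring_cases_2[OF p, of b]
  have "\<forall>x \<in> carrier_vec 2. ?\<sigma> (?\<sigma> (?\<sigma> x)) = x"
    unfolding \<Omega> v_eq using cases by (elim insertE disjE) (simp_all add: aff_mat2_vec2 F2)
  hence ct: "cycle_type (carrier_vec 2) ?\<sigma> = (\<lambda>j. if j = 1 then card {x \<in> carrier_vec 2. ?\<sigma> x = x}
      else if j = 3 then card {x \<in> carrier_vec 2. ?\<sigma> x \<noteq> x} div 3 else 0)"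
    by (intro cycle_type_order_3) auto
  have "\<exists>x\<^sub>0 \<in> carrier_vec 2. \<forall>x \<in> carrier_vec 2. ?\<sigma> x = x \<longleftrightarrow> x = x\<^sub>0"
    unfolding \<Omega> v_eq using cases by (elim insertE disjE) (simp_all add: aff_mat2_vec2 F2)
  then obtain x\<^sub>0 where x\<^sub>0: "x\<^sub>0 \<in> carrier_vec 2" "\<And>x. x \<in> carrier_vec 2 \<Longrightarrow> ?\<sigma> x = x \<longleftrightarrow> x = x\<^sub>0"
    by blast
  hence "{x \<in> carrier_vec 2. ?\<sigma> x = x} = {x\<^sub>0}" "{x \<in> carrier_vec 2. ?\<sigma> x \<noteq> x} = carrier_vec 2 - {x\<^sub>0}"
    by auto
  thus ?thesis unfolding ct using x\<^sub>0(1) by (simp only:) (auto simp: card_carrier_vec p x1x3_def)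
qed

lemma CGL_1: "CGL 1 = {mat 1 1 (\<lambda>_. a) | a :: 'a::field. a \<noteq> 0 \<and> a + 1 \<noteq> 0}"
proof -
  have "A \<in> CGL 1 \<longleftrightarrow> (\<exists>a. A = mat 1 1 (\<lambda>_. a) \<and> a \<noteq> 0 \<and> a + 1 \<noteq> 0)" for A :: "'a mat"
  proof
    assume "A \<in> CGL 1"
    hence A: "A \<in> carrier_mat 1 1" and d: "det A \<noteq> 0" "det (A + 1\<^sub>m 1) \<noteq> 0" unfolding CGL_eq_det by auto
    have "A = mat 1 1 (\<lambda>_. A $$ (0,0))" by (rule eq_matI) (use A in auto)
    moreover have "det (A + 1\<^sub>m 1) = A $$ (0,0) + 1" using A by (subst det_single) auto
    ultimately show "\<exists>a. A = mat 1 1 (\<lambda>_. a) \<and> a \<noteq> 0 \<and> a + 1 \<noteq> 0"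
      using d det_single[OF A] by metis
  next
    assume "\<exists>a. A = mat 1 1 (\<lambda>_. a) \<and> a \<noteq> 0 \<and> a + 1 \<noteq> 0"
    then obtain a where A: "A = mat 1 1 (\<lambda>_. a)" "a \<noteq> 0" "a + 1 \<noteq> 0" by auto
    have "det (A + 1\<^sub>m 1) = a + 1" unfolding A by (subst det_single) auto
    moreover have "det A = a" unfolding A by (subst det_single) auto
    ultimately show "A \<in> CGL 1" unfolding CGL_eq_det using A by auto
  qed
  thus ?thesis by auto
qed

lemma CGL_1_F2:
  assumes p: "CARD('a::prime_card) = 2"
  shows "(CGL 1 :: 'a mod_ring mat set) = {}"
proof -
  have "a = 0 \<or> a + 1 = 0" for a :: "'a mod_ring"
    using mod_ring_cases_2[OF p, of a] numeral_mod_ring_2[OF p, of "num.Bit0 num.One"]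
    by auto
  thus ?thesis unfolding CGL_1 by auto
qed

lemma CGL_1_F3:
  assumes p: "CARD('a::prime_card) = 3"
  shows "(CGL 1 :: 'a mod_ring mat set) = {1\<^sub>m 1}"
proof -
  note F3 = numeral_mod_ring_eq_0_iff[where 'a='a, unfolded p]
  have "a \<noteq> 0 \<and> a + 1 \<noteq> 0 \<longleftrightarrow> a = 1" for a :: "'a mod_ring"
    using mod_ring_cases_3[OF p, of a] by (auto simp: F3)
  moreover have "mat 1 1 (\<lambda>_. 1) = (1\<^sub>m 1 :: 'a mod_ring mat)" by (rule eq_matI) auto
  ultimately show ?thesis unfolding CGL_1 by auto
qed

lemma CGL_pow_Suc_eq_empty: "CGL d = ({} :: 'a::comm_ring_1 mat set) \<Longrightarrow> CGL_pow d (Suc l) = ({} :: 'a mat set)"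
  by (simp add: CGL_pow_Suc)

lemma CGL_pow_eq_one:
  assumes "CGL d = {1\<^sub>m d :: 'a::comm_ring_1 mat}"
  shows "CGL_pow d l = {1\<^sub>m d :: 'a mat}"
  using assms by (induction l) (simp_all add: CGL_pow_0 CGL_pow_Suc)

lemma CGL_2_F2:
  assumes p: "CARD('a::prime_card) = 2"
  shows "(CGL 2 :: 'a mod_ring mat set) = {mat2 0 1 1 1, mat2 1 1 1 0}"
proof (intro equalityI subsetI)
  note F2 = numeral_mod_ring_eq_0_iff[where 'a='a, unfolded p]
  fix M :: "'a mod_ring mat" assume "M \<in> CGL 2"
  hence M: "M \<in> carrier_mat 2 2" and det: "det M \<noteq> 0" "det (M + 1\<^sub>m 2) \<noteq> 0"
    unfolding CGL_eq_det by auto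
  obtain a b c d where M_eq: "M = mat2 a b c d" using mat2_cases[OF M] by blast
  from det have "det (mat2 a b c d) \<noteq> 0" "det (mat2 a b c d + 1\<^sub>m 2) \<noteq> 0" unfolding M_eq .
  thus "M \<in> {mat2 0 1 1 1, mat2 1 1 1 0}"
    unfolding M_eq mat2_one mat2_plus det_mat2
    using mod_ring_cases_2[OF p, of a] mod_ring_cases_2[OF p, of b]
      mod_ring_cases_2[OF p, of c] mod_ring_cases_2[OF p, of d]
    by (elim disjE) (simp_all add: F2)
next
  note F2 = numeral_mod_ring_eq_0_iff[where 'a='a, unfolded p]
  fix M :: "'a mod_ring mat" assume "M \<in> {mat2 0 1 1 1, mat2 1 1 1 0}"
  thus "M \<in> CGL 2" unfolding CGL_eq_det by (elim insertE) (simp_all add: det_mat2 mat2_one mat2_plus F2)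
qed

lemma CGL_pow_2_F2:
  assumes p: "CARD('a::prime_card) = 2" and l: "2 \<le> l"
  shows "(CGL_pow 2 l :: 'a mod_ring mat set) = {1\<^sub>m 2, mat2 0 1 1 1, mat2 1 1 1 0}"
  unfolding mat2_one using l
proof (induction l rule: dec_induct)
  let ?I = "mat2 1 0 0 1 :: 'a mod_ring mat"
  let ?A = "mat2 0 1 1 1 :: 'a mod_ring mat" and ?B = "mat2 1 1 1 0 :: 'a mod_ring mat"
  have table: "?A * ?A = ?B" "?A * ?B = ?I" "?B * ?A = ?I" "?B * ?B = ?A" "?A * ?I = ?A" "?B * ?I = ?B"
    by (simp_all add: mat2_mult numeral_mod_ring_2[OF p])
  have products: "{X * Y | X Y. X \<in> {?A, ?B} \<and> Y \<in> S} = {?I, ?A, ?B}"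
    if S: "S = {?A, ?B} \<or> S = {?I, ?A, ?B}" for S
  proof (intro equalityI subsetI)
    fix M assume "M \<in> {X * Y | X Y. X \<in> {?A, ?B} \<and> Y \<in> S}"
    thus "M \<in> {?I, ?A, ?B}" using S table by auto
  next
    fix M assume "M \<in> {?I, ?A, ?B}"
    hence "\<exists>X \<in> {?A, ?B}. \<exists>Y \<in> S. M = X * Y" using S table by auto
    thus "M \<in> {X * Y | X Y. X \<in> {?A, ?B} \<and> Y \<in> S}" by blast
  qed
  {
    case base
    show ?case unfolding CGL_pow_2 CGL_2_F2[OF p] by (rule products) simp
  next
    case (step l)
    show ?case unfolding CGL_pow_Suc CGL_2_F2[OF p] step.IH by (rule products) simp
  }
qed

lemma CT_aff_1_F3:
  assumes p: "CARD('a::prime_card) = 3"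
  shows "CT_aff 1 {1\<^sub>m 1 :: 'a mod_ring mat} = {x1_3, x3}"
proof (intro equalityI subsetI)
  fix f assume "f \<in> CT_aff 1 {1\<^sub>m 1 :: 'a mod_ring mat}"
  then obtain v :: "'a mod_ring vec" where "v \<in> carrier_vec 1" "f = cycle_type (carrier_vec 1) (aff 1 (1\<^sub>m 1) v)"
    unfolding CT_aff_def by blast
  thus "f \<in> {x1_3, x3}" using translation_cycle_type_F3[OF p] by auto
next
  let ?e = "vec 1 (\<lambda>_. 1) :: 'a mod_ring vec"
  have "?e \<noteq> 0\<^sub>v 1" by (metis index_vec index_zero_vec(1) less_one zero_neq_one)
  hence "x3 = cycle_type (carrier_vec 1) (aff 1 (1\<^sub>m 1) ?e)"
    using translation_cycle_type_F3[OF p, of ?e] by simp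
  moreover have "x1_3 = cycle_type (carrier_vec 1) (aff 1 (1\<^sub>m 1) (0\<^sub>v 1 :: 'a mod_ring vec))"
    using translation_cycle_type_F3[OF p, of "0\<^sub>v 1"] by simp
  moreover have "?e \<in> carrier_vec 1" "(0\<^sub>v 1 :: 'a mod_ring vec) \<in> carrier_vec 1" by auto
  moreover fix f assume "f \<in> {x1_3, x3}"
  ultimately show "f \<in> CT_aff 1 {1\<^sub>m 1 :: 'a mod_ring mat}" unfolding CT_aff_def by blast
qed

lemma CT_aff_2_F2:
  assumes p: "CARD('a::prime_card) = 2"
  shows "CT_aff 2 {1\<^sub>m 2, mat2 0 1 1 1, mat2 1 1 1 0 :: 'a mod_ring mat} = {x1_4, x2_2, x1x3}"
proof (intro equalityI subsetI)
  fix f assume "f \<in> CT_aff 2 {1\<^sub>m 2, mat2 0 1 1 1, mat2 1 1 1 0 :: 'a mod_ring mat}"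
  then obtain M and v :: "'a mod_ring vec" where "M \<in> {1\<^sub>m 2, mat2 0 1 1 1, mat2 1 1 1 0}" "v \<in> carrier_vec 2"
    "f = cycle_type (carrier_vec 2) (aff 2 M v)"
    unfolding CT_aff_def by blast
  thus "f \<in> {x1_4, x2_2, x1x3}"
    using translation_cycle_type_F2[OF p] cycle_type_aff_CGL_2_F2[OF p] by auto
next
  let ?e = "vec2 1 0 :: 'a mod_ring vec"
  have "?e \<noteq> 0\<^sub>v 2" by (metis vec2_index(1) index_zero_vec(1) pos2 zero_neq_one)
  hence "x2_2 = cycle_type (carrier_vec 2) (aff 2 (1\<^sub>m 2) ?e)"
    using translation_cycle_type_F2[OF p, of ?e] by simp
  moreover have "x1_4 = cycle_type (carrier_vec 2) (aff 2 (1\<^sub>m 2) (0\<^sub>v 2 :: 'a mod_ring vec))"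
    using translation_cycle_type_F2[OF p, of "0\<^sub>v 2"] by simp
  moreover have "x1x3 = cycle_type (carrier_vec 2) (aff 2 (mat2 0 1 1 1) (0\<^sub>v 2 :: 'a mod_ring vec))"
    using cycle_type_aff_CGL_2_F2[OF p, of "mat2 0 1 1 1" "0\<^sub>v 2"] by simp
  moreover have "?e \<in> carrier_vec 2" "(0\<^sub>v 2 :: 'a mod_ring vec) \<in> carrier_vec 2" by auto
  moreover fix f assume "f \<in> {x1_4, x2_2, x1x3}"
  ultimately show "f \<in> CT_aff 2 {1\<^sub>m 2, mat2 0 1 1 1, mat2 1 1 1 0 :: 'a mod_ring mat}"
    unfolding CT_aff_def by blast
qed

theorem corollary3p3:
  fixes d l :: nat
  assumes "d \<ge> 1" and "l \<ge> 1"
  shows "Gamma TYPE('a::prime_card) d l = CT_aff d (CGL_pow d l :: 'a mod_ring mat set)"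
proof (cases "l = 1")
  case True
  show ?thesis unfolding Gamma_def True CGL_pow_1 by simp
next
  case False
  with assms(2) obtain l' where l: "l = Suc l'" "2 \<le> l" by (cases l) auto
  consider "(d, CARD('a)) = (1, 2)" | "(d, CARD('a)) = (1, 3)" | "(d, CARD('a)) = (2, 2)"
    | "(d, CARD('a)) \<notin> {(1, 2), (1, 3), (2, 2)}" by auto
  thus ?thesis
  proof cases
    case 1
    hence "(CGL_pow d l :: 'a mod_ring mat set) = {}"
      using CGL_pow_Suc_eq_empty[OF CGL_1_F2[where 'a='a]] l(1) by simp
    thus ?thesis unfolding Gamma_def CT_aff_def using 1 False by simp
  next
    case 2
    thus ?thesis unfolding Gamma_def
      using False CGL_pow_eq_one[OF CGL_1_F3[where 'a='a]] CT_aff_1_F3[where 'a='a] by simp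
  next
    case 3
    thus ?thesis unfolding Gamma_def
      using False CGL_pow_2_F2[where 'a='a, OF _ l(2)] CT_aff_2_F2[where 'a='a] by simp
  next
    case 4
    have "(CGL_pow d l :: 'a mod_ring mat set) = GL d"
      by (rule CGL_pow_eq_GL[OF cgl_shiftable_mod_ring[OF assms(1) 4] l(2)])
    thus ?thesis unfolding Gamma_def using 4 False by auto
  qed
qed

end
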